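(* Let $\Omega$ consist of all continuous functions $g:\mathbb R^p\to\mathbb R$, for all $p\ge1$. For $d\ge1$, $t\ge0$, $k\ge1$: (1) if $\mathcal F$ is the set of all functions $\mathcal G_1\to\mathbb R^m$ ($m\ge1$) represented in $\mathsf{GTL}_2^{(t)}(\Omega)$, then $\overline{\mathcal F_d}=\{f\in C(\mathcal G_1,\mathbb R^d):\rho_1(\mathsf{cr}^{(t)})\subseteq\rho_1(f)\}$; (2) if $\mathcal F$ is the set of all functions $\mathcal G_1\to\mathbb R^m$ represented in $\mathsf{TL}_{k+1}^{(t)}(\Omega)$, then $\overline{\mathcal F_d}=\{f\in C(\mathcal G_1,\mathbb R^d):\rho_1(\mathsf{vwl}_k^{(t)})\subseteq\rho_1(f)\}$; (3) if $\mathcal F$ is the set of all functions $\mathcal G_0\to\mathbb R^m$ represented in $\mathsf{TL}_2^{(t+1)}(\Omega)$, then $\overline{\mathcal F_d}=\{f\in C(\mathcal G_0,\mathbb R^d):\rho_0(\mathsf{gwl}_1^{(t)})\subseteq\rho_0(f)\}$; (4) if $\mathcal F$ is the set of all functions $\mathcal G_0\to\mathbb R^m$ represented in $\mathsf{TL}_{k+1}(\Omega)$, then $\overline{\mathcal F_d}=\{f\in C(\mathcal G_0,\mathbb R^d):\rho_0(\mathsf{gwl}_k^{(\infty)})\subseteq\rho_0(f)\}$.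
   Context: Fix integers $n\ge1$, $\ell\ge1$ and a compact set $K\subseteq\mathbb R^\ell$. A graph is $G=(V_G,E_G,\mathrm{col}_G)$ with $V_G=[n]$, $E_G$ a set of unordered pairs of distinct vertices, and $\mathrm{col}_G:V_G\to K$; $N_G(v)=\{u:uv\in E_G\}$. $\mathcal G_0$ is the set of such graphs and $\mathcal G_s=\{(G,\mathbf v):\mathbf v\in V_G^s\}$, topologized as a compact subset of $\{0,1\}^{n\times n}\times K^n\times[n]^s$. $C(\mathcal G_s,\mathbb R^d)$: continuous functions. For a set $\mathcal F$ of functions on $\mathcal G_s$, $\mathcal F_d$ is its subset with codomain $\mathbb R^d$ and $\overline{\mathcal F_d}$ the set of $h\in C(\mathcal G_s,\mathbb R^d)$ that are uniform limits (sup over $\mathcal G_s$) of sequences from $\mathcal F_d$. $\rho_s(f)=\{((G,\mathbf v),(H,\mathbf w)):f(G,\mathbf v)=f(H,\mathbf w)\}$. Tensor language: expressions $\varphi::=\mathbf 1_{x=y}\mid \mathbf 1_{x\neq y}\mid E(x,y)\mid P_s(x)\mid \varphi\cdot\varphi\mid \varphi+\varphi\mid a\cdot\varphi\mid g(\varphi_1,\dots,\varphi_p)\mid \sum_x\varphi$ ($g\in\Omega$ of arity $p$), usual free variables ($\sum_x$ binds $x$), semantics: $E$ is the adjacency indicator, $P_s(x)$ is $\mathrm{col}_G(\nu(x))_s$, $\mathbf 1_{x\,\mathrm{op}\,y}$ the (dis)equality indicator, $\cdot,+,a\cdot,g$ pointwise, $\sum_x$ sums over $V_G$. Summation depth: $0$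 for atoms, max for $\cdot,+,g(\dots)$, $+1$ for $\sum_x$. $\mathsf{TL}_k(\Omega)$: expressions using only variables $x_1,\dots,x_k$ (re-binding allowed); $\mathsf{TL}_k^{(t)}(\Omega)$: those of summation depth $\le t$. Guarded fragment $\mathsf{GTL}_2(\Omega)$: expressions with exactly one free variable ($x_1$ or $x_2$), built from $\mathbf 1_{x_i=x_i}$, $\mathbf 1_{x_i\ne x_i}$, $P_s(x_i)$ by $\cdot$ and $+$ of expressions with the same single free variable, $a\cdot$, $g(\varphi_1,\dots,\varphi_p)$ with all $\varphi_j$ having the same single free variable, and $\sum_{x_j}(E(x_i,x_j)\cdot\varphi)$ with $\{i,j\}=\{1,2\}$ and $\varphi$ having free variable $x_j$; $\mathsf{GTL}_2^{(t)}(\Omega)$ its subset of summation depth $\le t$. A function $f:\mathcal G_s\to\mathbb R^m$ is represented in a fragment $\mathcal L$ if there are $\varphi_1,\dots,\varphi_m\in\mathcal L$ with free variables among $x_1,\dots,x_s$ and $f(G,\mathbf v)=([\![\varphi_1]\!]^{\mathbf v}_G,\dots,[\![\varphi_m]\!]^{\mathbf v}_G)$. Color refinement: $\mathsf{cr}^{(0)}(G,v)=\mathrm{col}_G(v)$, $\mathsf{cr}^{(t+1)}(G,v)=(\mathsf{cr}^{(t)}(G,v),\{\!\{\mathsf{cr}^{(t)}(G,u):u\in N_G(v)\}\!\})$. $k$-WL: $\mathsf{atp}_k(G,\mathbf v)$ records for $i<j$ whether $v_i=v_j$ and whether $v_iv_j\in E_G$, and all $\mathrm{col}_G(v_i)$;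 $\mathsf{wl}_k^{(0)}=\mathsf{atp}_k$, $\mathsf{wl}_k^{(t+1)}(G,\mathbf v)=(\mathsf{wl}_k^{(t)}(G,\mathbf v),\{\!\{(\mathsf{atp}_{k+1}(G,(v_1,\dots,v_k,u)),\mathsf{wl}_k^{(t)}(G,\mathbf v[u/1]),\dots,\mathsf{wl}_k^{(t)}(G,\mathbf v[u/k])):u\in V_G\}\!\})$; $\mathsf{vwl}_k^{(t)}(G,v)=\mathsf{wl}_k^{(t)}(G,(v,\dots,v))$; $\mathsf{gwl}_k^{(t)}(G)=\{\!\{\mathsf{wl}_k^{(t)}(G,\mathbf v):\mathbf v\in V_G^k\}\!\}$. Labels compared as formal objects; $\rho_s(\mathsf{alg})$ is the set of pairs with equal labels; $\rho_0(\mathsf{gwl}_k^{(\infty)})=\bigcap_t\rho_0(\mathsf{gwl}_k^{(t)})$. *)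

theory Defs
  imports "HOL-Analysis.Analysis" "HOL-Library.Multiset"
begin

text \<open>Vertex set [n] is the finite type 'n (n = CARD('n) >= 1); colours live in real^'l
  (ell = CARD('l) >= 1). A graph is a pair (adjacency, colouring).\<close>

type_synonym ('n,'l) graph = "('n \<Rightarrow> 'n \<Rightarrow> bool) \<times> ((real^'l)^'n)"

definition adjG :: "('n::finite,'l::finite) graph \<Rightarrow> 'n \<Rightarrow> 'n \<Rightarrow> bool" where
  "adjG G = fst G"

definition colG :: "('n::finite,'l::finite) graph \<Rightarrow> 'n \<Rightarrow> real^'l" where
  "colG G v = snd G $ v"

definition is_graph :: "(real^'l) set \<Rightarrow> ('n::finite,'l::finite) graph \<Rightarrow> bool" where
  "is_graph K G \<longleftrightarrow> (\<forall>u v. adjG G u v = adjG G v u) \<and> (\<forall>v. \<not> adjG G v v)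
      \<and> (\<forall>v. colG G v \<in> K)"

text \<open>Continuity on G_0 and G_1: the adjacency and vertex components are discrete,
  so continuity means continuity in the colouring for every fixed discrete part.\<close>

definition cont0 :: "(real^'l) set \<Rightarrow> (('n::finite,'l::finite) graph \<Rightarrow> real^'d) \<Rightarrow> bool" where
  "cont0 K f \<longleftrightarrow> (\<forall>A. continuous_on {c. is_graph K (A,c)} (\<lambda>c. f (A,c)))"

definition cont1 :: "(real^'l) set \<Rightarrow> (('n::finite,'l::finite) graph \<times> 'n \<Rightarrow> real^'d) \<Rightarrow> bool" where
  "cont1 K f \<longleftrightarrow> (\<forall>A v. continuous_on {c. is_graph K (A,c)} (\<lambda>c. f ((A,c),v)))"

definition uclos0 :: "(real^'l) set \<Rightarrow> (('n::finite,'l::finite) graph \<Rightarrow> real^'d) set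
    \<Rightarrow> (('n,'l) graph \<Rightarrow> real^'d) set" where
  "uclos0 K F = {h. cont0 K h \<and> (\<exists>S. (\<forall>j. S j \<in> F) \<and>
      uniform_limit {G. is_graph K G} S h sequentially)}"

definition uclos1 :: "(real^'l) set \<Rightarrow> (('n::finite,'l::finite) graph \<times> 'n \<Rightarrow> real^'d) set
    \<Rightarrow> (('n,'l) graph \<times> 'n \<Rightarrow> real^'d) set" where
  "uclos1 K F = {h. cont1 K h \<and> (\<exists>S. (\<forall>j. S j \<in> F) \<and>
      uniform_limit {x. is_graph K (fst x)} S h sequentially)}"

text \<open>Variables x_i are indexed by naturals i (x_1, x_2, ...). Function applications carry
  the function g itself (acting on the list of argument values).\<close>

datatype 'l tl =
    EqI nat nat | NeqI nat nat | Edge nat nat | Pcol 'l nat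
  | Mul "'l tl" "'l tl" | Add "'l tl" "'l tl" | Scale real "'l tl"
  | App "real list \<Rightarrow> real" "'l tl list" | Sum nat "'l tl"

fun sem :: "('n::finite,'l::finite) graph \<Rightarrow> (nat \<Rightarrow> 'n) \<Rightarrow> 'l tl \<Rightarrow> real" where
  "sem G \<nu> (EqI i j) = (if \<nu> i = \<nu> j then 1 else 0)"
| "sem G \<nu> (NeqI i j) = (if \<nu> i \<noteq> \<nu> j then 1 else 0)"
| "sem G \<nu> (Edge i j) = (if adjG G (\<nu> i) (\<nu> j) then 1 else 0)"
| "sem G \<nu> (Pcol s i) = colG G (\<nu> i) $ s"
| "sem G \<nu> (Mul a b) = sem G \<nu> a * sem G \<nu> b"
| "sem G \<nu> (Add a b) = sem G \<nu> a + sem G \<nu> b"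
| "sem G \<nu> (Scale c a) = c * sem G \<nu> a"
| "sem G \<nu> (App g as) = g (map (sem G \<nu>) as)"
| "sem G \<nu> (Sum i a) = (\<Sum>u\<in>UNIV. sem G (\<nu>(i := u)) a)"

fun fv :: "'l tl \<Rightarrow> nat set" where
  "fv (EqI i j) = {i, j}"
| "fv (NeqI i j) = {i, j}"
| "fv (Edge i j) = {i, j}"
| "fv (Pcol s i) = {i}"
| "fv (Mul a b) = fv a \<union> fv b"
| "fv (Add a b) = fv a \<union> fv b"
| "fv (Scale c a) = fv a"
| "fv (App g as) = (\<Union>a\<in>set as. fv a)"
| "fv (Sum i a) = fv a - {i}"

fun vars :: "'l tl \<Rightarrow> nat set" where
  "vars (EqI i j) = {i, j}"
| "vars (NeqI i j) = {i, j}"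
| "vars (Edge i j) = {i, j}"
| "vars (Pcol s i) = {i}"
| "vars (Mul a b) = vars a \<union> vars b"
| "vars (Add a b) = vars a \<union> vars b"
| "vars (Scale c a) = vars a"
| "vars (App g as) = (\<Union>a\<in>set as. vars a)"
| "vars (Sum i a) = insert i (vars a)"

fun sdepth :: "'l tl \<Rightarrow> nat" where
  "sdepth (EqI i j) = 0"
| "sdepth (NeqI i j) = 0"
| "sdepth (Edge i j) = 0"
| "sdepth (Pcol s i) = 0"
| "sdepth (Mul a b) = max (sdepth a) (sdepth b)"
| "sdepth (Add a b) = max (sdepth a) (sdepth b)"
| "sdepth (Scale c a) = sdepth a"
| "sdepth (App g as) = Max (insert 0 (set (map sdepth as)))"
| "sdepth (Sum i a) = Suc (sdepth a)"

text \<open>Omega = all continuous g : R^p -> R, p >= 1. A function g on lists is used at arity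
  p = number of arguments; continuity on R^p (Euclidean metric) written out.\<close>

definition cont_arity :: "nat \<Rightarrow> (real list \<Rightarrow> real) \<Rightarrow> bool" where
  "cont_arity p g \<longleftrightarrow> (\<forall>x. length x = p \<longrightarrow> (\<forall>e>0. \<exists>\<delta>>0. \<forall>y. length y = p \<and>
       sqrt (\<Sum>i<p. (x ! i - y ! i)\<^sup>2) < \<delta> \<longrightarrow> \<bar>g y - g x\<bar> < e))"

fun omega_ok :: "'l tl \<Rightarrow> bool" where
  "omega_ok (Mul a b) = (omega_ok a \<and> omega_ok b)"
| "omega_ok (Add a b) = (omega_ok a \<and> omega_ok b)"
| "omega_ok (Scale c a) = omega_ok a"
| "omega_ok (App g as) = (as \<noteq> [] \<and> cont_arity (length as) g \<and> (\<forall>a\<in>set as. omega_ok a))"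
| "omega_ok (Sum i a) = omega_ok a"
| "omega_ok _ = True"

definition TL :: "nat \<Rightarrow> 'l tl set" where
  "TL k = {\<phi>. vars \<phi> \<subseteq> {1..k} \<and> omega_ok \<phi>}"

definition TLt :: "nat \<Rightarrow> nat \<Rightarrow> 'l tl set" where
  "TLt k t = {\<phi>. \<phi> \<in> TL k \<and> sdepth \<phi> \<le> t}"

text \<open>Guarded fragment: gtl i phi means phi is guarded with the single free variable x_i.\<close>
inductive gtl :: "nat \<Rightarrow> 'l tl \<Rightarrow> bool" where
  g_eq: "i \<in> {1,2} \<Longrightarrow> gtl i (EqI i i)"
| g_neq: "i \<in> {1,2} \<Longrightarrow> gtl i (NeqI i i)"
| g_col: "i \<in> {1,2} \<Longrightarrow> gtl i (Pcol s i)"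
| g_mul: "gtl i a \<Longrightarrow> gtl i b \<Longrightarrow> gtl i (Mul a b)"
| g_add: "gtl i a \<Longrightarrow> gtl i b \<Longrightarrow> gtl i (Add a b)"
| g_scale: "gtl i a \<Longrightarrow> gtl i (Scale c a)"
| g_app: "as \<noteq> [] \<Longrightarrow> (\<forall>a\<in>set as. gtl i a) \<Longrightarrow> gtl i (App g as)"
| g_sum: "{i, j} = {1, 2} \<Longrightarrow> gtl j a \<Longrightarrow> gtl i (Sum j (Mul (Edge i j) a))"

definition GTL2 :: "'l tl set" where
  "GTL2 = {\<phi>. (\<exists>i. gtl i \<phi>) \<and> omega_ok \<phi>}"

definition GTL2t :: "nat \<Rightarrow> 'l tl set" where
  "GTL2t t = {\<phi>. \<phi> \<in> GTL2 \<and> sdepth \<phi> \<le> t}"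

definition rep1 :: "(real^'l) set \<Rightarrow> 'l tl set \<Rightarrow> (('n::finite,'l::finite) graph \<times> 'n \<Rightarrow> real^'d) set" where
  "rep1 K L = {f. \<exists>\<phi> :: 'd \<Rightarrow> 'l tl. (\<forall>i. \<phi> i \<in> L \<and> fv (\<phi> i) \<subseteq> {1}) \<and>
      (\<forall>G v. is_graph K G \<longrightarrow> f (G, v) = (\<chi> i. sem G (\<lambda>_. v) (\<phi> i)))}"

definition rep0 :: "(real^'l) set \<Rightarrow> 'l tl set \<Rightarrow> (('n::finite,'l::finite) graph \<Rightarrow> real^'d) set" where
  "rep0 K L = {f. \<exists>\<phi> :: 'd \<Rightarrow> 'l tl. (\<forall>i. \<phi> i \<in> L \<and> fv (\<phi> i) = {}) \<and>
      (\<forall>G. is_graph K G \<longrightarrow> f G = (\<chi> i. sem G (\<lambda>_. undefined) (\<phi> i)))}"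

datatype 'c lab =
    LCol 'c
  | LAtp "(bool \<times> bool) list" "'c list"
  | LPair "'c lab" "'c lab multiset"
  | LTup "'c lab list"

fun cr :: "nat \<Rightarrow> ('n::finite,'l::finite) graph \<Rightarrow> 'n \<Rightarrow> (real^'l) lab" where
  "cr 0 G v = LCol (colG G v)"
| "cr (Suc t) G v = LPair (cr t G v) (image_mset (cr t G) (mset_set {u. adjG G v u}))"

definition atp :: "('n::finite,'l::finite) graph \<Rightarrow> 'n list \<Rightarrow> (real^'l) lab" where
  "atp G vs = LAtp
     (concat (map (\<lambda>i. map (\<lambda>j. (vs ! i = vs ! j, adjG G (vs ! i) (vs ! j))) [Suc i..<length vs])
        [0..<length vs]))
     (map (colG G) vs)"

fun wl :: "nat \<Rightarrow> nat \<Rightarrow> ('n::finite,'l::finite) graph \<Rightarrow> 'n list \<Rightarrow> (real^'l) lab" where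
  "wl k 0 G vs = atp G vs"
| "wl k (Suc t) G vs = LPair (wl k t G vs)
     (image_mset (\<lambda>u. LTup (atp G (vs @ [u]) # map (\<lambda>i. wl k t G (vs[i := u])) [0..<k]))
        (mset_set (UNIV :: 'n set)))"

definition vwl :: "nat \<Rightarrow> nat \<Rightarrow> ('n::finite,'l::finite) graph \<Rightarrow> 'n \<Rightarrow> (real^'l) lab" where
  "vwl k t G v = wl k t G (replicate k v)"

definition gwl :: "nat \<Rightarrow> nat \<Rightarrow> ('n::finite,'l::finite) graph \<Rightarrow> (real^'l) lab multiset" where
  "gwl k t G = image_mset (wl k t G) (mset_set {vs :: 'n list. length vs = k})"

definition rho1_sub :: "(real^'l) set \<Rightarrow> (('n::finite,'l::finite) graph \<Rightarrow> 'n \<Rightarrow> 'c)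
    \<Rightarrow> (('n,'l) graph \<times> 'n \<Rightarrow> 'b) \<Rightarrow> bool" where
  "rho1_sub K alg f \<longleftrightarrow> (\<forall>G v H w. is_graph K G \<and> is_graph K H \<and> alg G v = alg H w
      \<longrightarrow> f (G, v) = f (H, w))"

definition rho0_sub :: "(real^'l) set \<Rightarrow> (('n::finite,'l::finite) graph \<Rightarrow> 'c)
    \<Rightarrow> (('n,'l) graph \<Rightarrow> 'b) \<Rightarrow> bool" where
  "rho0_sub K alg f \<longleftrightarrow> (\<forall>G H. is_graph K G \<and> is_graph K H \<and> alg G = alg H
      \<longrightarrow> f G = f H)"

text \<open>gwl_k^(infinity): equal labels at every round.\<close>
definition rho0_sub_gwl_inf :: "(real^'l) set \<Rightarrow> nat \<Rightarrow> (('n::finite,'l::finite) graph \<Rightarrow> 'b) \<Rightarrow> bool" where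
  "rho0_sub_gwl_inf K k f \<longleftrightarrow> (\<forall>G H. is_graph K G \<and> is_graph K H \<and> (\<forall>t. gwl k t G = gwl k t H)
      \<longrightarrow> f G = f H)"

end

theory Submission
  imports Defs
begin

text \<open>Each of the four closures is identified by a lattice form of the Stone--Weierstrass
  theorem on the compact space of coloured graphs: the represented functions are closed under
  constants, affine maps, \<open>max\<close> and \<open>min\<close>, since any continuous function may be applied to
  them, so a continuous function is a uniform limit of them iff it respects the equivalence
  they induce.  That equivalence is the one of the labelling algorithm.  Soundness (formulas
  cannot tell equally labelled graphs apart) is an induction on formulas and rounds.
  Completeness is an induction on rounds: a continuous bump applied to finitely many
  separating formulas is the indicator of one label class, and summing it over the neighbours,
  over the vertex of an extended tuple, or over all \<open>k\<close>-tuples counts exactly the label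
  multiplicities that the next round compares.\<close>

lemma sem_cong_fv: "(\<forall>i\<in>fv \<phi>. \<nu> i = \<mu> i) \<Longrightarrow> sem G \<nu> \<phi> = sem G \<mu> \<phi>"
proof (induction \<phi> arbitrary: \<nu> \<mu>)
  case (App g as)
  have "map (sem G \<nu>) as = map (sem G \<mu>) as"
    by (rule map_cong[OF refl], rule App.IH) (use App.prems in auto)
  then show ?case by (simp only: sem.simps)
next
  case (Sum j a)
  have "sem G (\<nu>(j := u)) a = sem G (\<mu>(j := u)) a" for u
    by (rule Sum.IH) (use Sum.prems in auto)
  then show ?case by simp
next
  case (Mul a b)
  have "sem G \<nu> a = sem G \<mu> a" "sem G \<nu> b = sem G \<mu> b"
    by (rule Mul.IH; use Mul.prems in simp)+
  then show ?case by simp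
next
  case (Add a b)
  have "sem G \<nu> a = sem G \<mu> a" "sem G \<nu> b = sem G \<mu> b"
    by (rule Add.IH; use Add.prems in simp)+
  then show ?case by simp
qed simp_all

fun rename_vars :: "(nat \<Rightarrow> nat) \<Rightarrow> 'l tl \<Rightarrow> 'l tl" where
  "rename_vars \<sigma> (EqI i j) = EqI (\<sigma> i) (\<sigma> j)"
| "rename_vars \<sigma> (NeqI i j) = NeqI (\<sigma> i) (\<sigma> j)"
| "rename_vars \<sigma> (Edge i j) = Edge (\<sigma> i) (\<sigma> j)"
| "rename_vars \<sigma> (Pcol s i) = Pcol s (\<sigma> i)"
| "rename_vars \<sigma> (Mul a b) = Mul (rename_vars \<sigma> a) (rename_vars \<sigma> b)"
| "rename_vars \<sigma> (Add a b) = Add (rename_vars \<sigma> a) (rename_vars \<sigma> b)"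
| "rename_vars \<sigma> (Scale c a) = Scale c (rename_vars \<sigma> a)"
| "rename_vars \<sigma> (App g as) = App g (map (rename_vars \<sigma>) as)"
| "rename_vars \<sigma> (Sum i a) = Sum (\<sigma> i) (rename_vars \<sigma> a)"

lemma sem_rename_vars:
  assumes "inj \<sigma>"
  shows "sem G \<nu> (rename_vars \<sigma> \<phi>) = sem G (\<nu> \<circ> \<sigma>) \<phi>"
proof (induction \<phi> arbitrary: \<nu>)
  case (App g as)
  have "map (sem G \<nu> \<circ> rename_vars \<sigma>) as = map (sem G (\<nu> \<circ> \<sigma>)) as"
    using App.IH by (intro map_cong) (auto simp: comp_def)
  then show ?case by (simp only: sem.simps rename_vars.simps map_map)
next
  case (Sum i a)
  have "(\<nu>(\<sigma> i := u)) \<circ> \<sigma> = (\<nu> \<circ> \<sigma>)(i := u)" for u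
    using assms by (auto simp: fun_eq_iff inj_eq)
  then show ?case by (simp only: sem.simps rename_vars.simps Sum.IH)
qed simp_all

lemma fv_rename_vars: "inj \<sigma> \<Longrightarrow> fv (rename_vars \<sigma> \<phi>) = \<sigma> ` fv \<phi>"
  by (induction \<phi>) (auto simp: inj_eq)

lemma vars_rename_vars: "vars (rename_vars \<sigma> \<phi>) = \<sigma> ` vars \<phi>"
  by (induction \<phi>) auto

lemma sdepth_rename_vars [simp]: "sdepth (rename_vars \<sigma> \<phi>) = sdepth \<phi>"
proof (induction \<phi>)
  case (App g as)
  then show ?case by (simp add: comp_def cong: map_cong)
qed simp_all

lemma omega_ok_rename_vars [simp]: "omega_ok (rename_vars \<sigma> \<phi>) = omega_ok \<phi>"
  by (induction \<phi>) auto

lemma sem_Sum_rename_bound: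
  assumes "w \<notin> fv (Sum j \<psi>)"
  shows "sem G \<nu> (Sum w (rename_vars (Transposition.transpose j w) \<psi>)) = sem G \<nu> (Sum j \<psi>)"
proof -
  have "sem G (\<nu>(w := u)) (rename_vars (Transposition.transpose j w) \<psi>) = sem G (\<nu>(j := u)) \<psi>" for u
    unfolding sem_rename_vars[OF inj_transpose]
    by (rule sem_cong_fv) (use assms in \<open>auto simp: Transposition.transpose_def\<close>)
  then show ?thesis by simp
qed

lemma cont_arity_if_lipschitz:
  assumes L: "L \<ge> 0" and lip: "\<And>x y. length x = p \<Longrightarrow> length y = p \<Longrightarrow>
      \<bar>g y - g x\<bar> \<le> L * (\<Sum>i<p. \<bar>x ! i - y ! i\<bar>)"
  shows "cont_arity p g"
  unfolding cont_arity_def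
proof (intro allI impI)
  fix x :: "real list" and e :: real
  assume x: "length x = p" and e: "e > 0"
  define \<delta> where "\<delta> = e / (L * real p + 1)"
  have d: "L * real p + 1 > 0" using L by (simp add: add_nonneg_pos)
  have dpos: "\<delta> > 0" using e d unfolding \<delta>_def by simp
  show "\<exists>\<delta>>0. \<forall>y. length y = p \<and> sqrt (\<Sum>i<p. (x ! i - y ! i)\<^sup>2) < \<delta> \<longrightarrow> \<bar>g y - g x\<bar> < e"
  proof (intro exI[of _ \<delta>] conjI allI impI dpos)
    fix y :: "real list"
    assume y: "length y = p \<and> sqrt (\<Sum>i<p. (x ! i - y ! i)\<^sup>2) < \<delta>"
    have "\<bar>x ! i - y ! i\<bar> \<le> sqrt (\<Sum>j<p. (x ! j - y ! j)\<^sup>2)" if "i < p" for i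
    proof -
      have "(x ! i - y ! i)\<^sup>2 \<le> (\<Sum>j<p. (x ! j - y ! j)\<^sup>2)"
        using that by (intro member_le_sum) auto
      then show ?thesis using real_sqrt_le_mono by fastforce
    qed
    then have "(\<Sum>i<p. \<bar>x ! i - y ! i\<bar>) \<le> real p * \<delta>"
      using sum_mono[of "{..<p}" "\<lambda>i. \<bar>x ! i - y ! i\<bar>" "\<lambda>_. \<delta>"] y by fastforce
    moreover have "\<bar>g y - g x\<bar> \<le> L * (\<Sum>i<p. \<bar>x ! i - y ! i\<bar>)"
      using lip[OF x] y by blast
    ultimately have "\<bar>g y - g x\<bar> \<le> L * (real p * \<delta>)"
      using L by (meson mult_left_mono order_trans)
    also have "\<dots> < e"
      using e d L unfolding \<delta>_def by (simp add: field_simps)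
    finally show "\<bar>g y - g x\<bar> < e" .
  qed
qed

lemma cont_arity_const: "cont_arity p (\<lambda>_. c)"
  by (rule cont_arity_if_lipschitz[of 0]) auto

lemma cont_arity_affine: "cont_arity (Suc 0) (\<lambda>xs. a * xs ! 0 + b)"
proof (rule cont_arity_if_lipschitz[of "\<bar>a\<bar>"])
  fix x y :: "real list"
  have "\<bar>a * y ! 0 + b - (a * x ! 0 + b)\<bar> = \<bar>a\<bar> * \<bar>x ! 0 - y ! 0\<bar>"
    by (simp add: abs_mult[symmetric] algebra_simps abs_minus_commute)
  then show "\<bar>a * y ! 0 + b - (a * x ! 0 + b)\<bar> \<le> \<bar>a\<bar> * (\<Sum>i<Suc 0. \<bar>x ! i - y ! i\<bar>)" by simp
qed simp

lemma cont_arity_max: "cont_arity (Suc (Suc 0)) (\<lambda>xs. max (xs ! 0) (xs ! Suc 0))"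
  by (rule cont_arity_if_lipschitz[of 1]) (auto simp: max_def abs_if)

lemma cont_arity_min: "cont_arity (Suc (Suc 0)) (\<lambda>xs. min (xs ! 0) (xs ! Suc 0))"
  by (rule cont_arity_if_lipschitz[of 1]) (auto simp: min_def abs_if)

definition bump :: "real list \<Rightarrow> real list \<Rightarrow> real" where
  "bump z ys = max 0 (1 - (\<Sum>i<length z. \<bar>ys ! i - z ! i\<bar>))"

lemma bump_apex [simp]: "bump z z = 1"
  unfolding bump_def by simp

lemma cont_arity_bump: "cont_arity (length z) (bump z)"
proof (rule cont_arity_if_lipschitz[of 1])
  fix x y :: "real list"
  let ?S = "\<lambda>ys. (\<Sum>i<length z. \<bar>ys ! i - z ! i\<bar>)"
  have "?S y - ?S x \<le> (\<Sum>i<length z. \<bar>x ! i - y ! i\<bar>)" "?S x - ?S y \<le> (\<Sum>i<length z. \<bar>x ! i - y ! i\<bar>)"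
    unfolding sum_subtractf[symmetric] by (intro sum_mono; linarith)+
  then show "\<bar>bump z y - bump z x\<bar> \<le> 1 * (\<Sum>i<length z. \<bar>x ! i - y ! i\<bar>)"
    unfolding bump_def by (simp add: max_def abs_if)
qed simp

lemma isCont_cont_arity_comp:
  fixes F :: "'a \<Rightarrow> 'c::metric_space \<Rightarrow> real"
  assumes g: "cont_arity (length as) g" and F: "\<And>a. a \<in> set as \<Longrightarrow> isCont (F a) c0"
  shows "isCont (\<lambda>c. g (map (\<lambda>a. F a c) as)) c0"
  unfolding isCont_def tendsto_iff
proof (intro allI impI)
  let ?p = "length as" and ?x = "map (\<lambda>a. F a c0) as"
  fix e :: real assume e: "e > 0"
  obtain \<delta> where \<delta>: "\<delta> > 0"
    "\<And>y. length y = ?p \<Longrightarrow> sqrt (\<Sum>i<?p. (?x ! i - y ! i)\<^sup>2) < \<delta> \<Longrightarrow> \<bar>g y - g ?x\<bar> < e"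
    using g[unfolded cont_arity_def, rule_format, of ?x e] e by auto
  have "((\<lambda>c. \<Sum>i<?p. \<bar>F (as!i) c - F (as!i) c0\<bar>) \<longlongrightarrow> (\<Sum>i<?p. \<bar>F (as!i) c0 - F (as!i) c0\<bar>)) (at c0)"
    using F by (intro tendsto_intros) (simp add: isCont_def)
  then have "eventually (\<lambda>c. (\<Sum>i<?p. \<bar>F (as!i) c - F (as!i) c0\<bar>) < \<delta>) (at c0)"
    using \<delta>(1) by (simp add: order_tendstoD(2))
  then show "eventually (\<lambda>c. dist (g (map (\<lambda>a. F a c) as)) (g ?x) < e) (at c0)"
  proof (rule eventually_mono)
    fix c assume c: "(\<Sum>i<?p. \<bar>F (as!i) c - F (as!i) c0\<bar>) < \<delta>"
    let ?y = "map (\<lambda>a. F a c) as"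
    have "sqrt (\<Sum>i<?p. (?x!i - ?y!i)\<^sup>2) \<le> (\<Sum>i<?p. \<bar>?x!i - ?y!i\<bar>)"
      using L2_set_le_sum_abs[of "\<lambda>i. ?x!i - ?y!i" "{..<?p}"] by (simp add: L2_set_def)
    also have "\<dots> = (\<Sum>i<?p. \<bar>F (as!i) c - F (as!i) c0\<bar>)"
      by (intro sum.cong) (auto simp: abs_minus_commute)
    finally show "dist (g ?y) (g ?x) < e"
      using c \<delta>(2)[of ?y] by (simp add: dist_real_def)
  qed
qed

lemma isCont_sem: "omega_ok \<phi> \<Longrightarrow> isCont (\<lambda>c. sem (A, c) \<nu> \<phi>) c0"
proof (induction \<phi> arbitrary: \<nu>)
  case (App g as)
  have "isCont (\<lambda>c. g (map (\<lambda>a. sem (A, c) \<nu> a) as)) c0"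
    by (rule isCont_cont_arity_comp) (use App in auto)
  then show ?case by simp
qed (auto simp: adjG_def colG_def)

lemma continuous_on_sem: "omega_ok \<phi> \<Longrightarrow> continuous_on S (\<lambda>c. sem (A, c) \<nu> \<phi>)"
  by (intro continuous_at_imp_continuous_on ballI isCont_sem)

lemma compact_colourings:
  fixes K :: "(real^'l::finite) set"
  assumes K: "compact K"
  shows "compact {c :: (real^'l)^'n::finite. is_graph K (A, c)}"
proof (cases "(\<forall>u v. A u v = A v u) \<and> (\<forall>v. \<not> A v v)")
  case False
  then have "{c :: (real^'l)^'n. is_graph K (A, c)} = {}"
    by (auto simp: is_graph_def adjG_def)
  then show ?thesis by simp
next
  case True
  define C where "C = (\<Inter>v. (\<lambda>c::(real^'l)^'n. c $ v) -` K)"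
  have eq: "{c :: (real^'l)^'n. is_graph K (A, c)} = C"
    using True by (auto simp: is_graph_def adjG_def colG_def C_def)
  have "closed C"
    unfolding C_def using compact_imp_closed[OF K] by (intro closed_INT ballI closed_vimage_vec_nth)
  obtain B where B: "\<forall>x\<in>K. norm x \<le> B"
    using compact_imp_bounded[OF K] by (auto simp: bounded_iff)
  have "norm c \<le> real CARD('n) * B" if "c \<in> C" for c
  proof -
    have "norm c \<le> (\<Sum>v\<in>UNIV. norm (c $ v))"
      unfolding norm_vec_def by (rule L2_set_le_sum) simp
    also have "\<dots> \<le> (\<Sum>v\<in>(UNIV::'n set). B)"
      using that B unfolding C_def by (intro sum_mono) auto
    finally show ?thesis by simp
  qed
  then have "bounded C"
    unfolding bounded_iff by blast
  with \<open>closed C\<close> show ?thesis unfolding eq by (simp add: compact_eq_bounded_closed)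
qed

lemma finite_positive_cover_graphs:
  fixes K :: "(real^'l::finite) set" and H :: "('n::finite,'l) graph \<Rightarrow> ('n,'l) graph \<Rightarrow> real"
  assumes K: "compact K"
    and pos: "\<And>y. is_graph K y \<Longrightarrow> H y y > 0"
    and cont: "\<And>y A. is_graph K y \<Longrightarrow> continuous_on {c. is_graph K (A,c)} (\<lambda>c. H y (A,c))"
  shows "\<exists>Y. finite Y \<and> Y \<subseteq> {G. is_graph K G} \<and> (\<forall>x\<in>{G. is_graph K G}. \<exists>y\<in>Y. H y x > 0)"
proof -
  have "\<exists>C. finite C \<and> C \<subseteq> {c. is_graph K (A,c)} \<and> (\<forall>c'\<in>{c. is_graph K (A,c)}. \<exists>c\<in>C. H (A,c) (A,c') > 0)" for A
  proof -
    let ?S = "{c :: (real^'l)^'n. is_graph K (A,c)}"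
    have "\<exists>d>0. \<forall>c'\<in>?S. dist c' c < d \<longrightarrow> H (A,c) (A,c') > 0" if c: "c \<in> ?S" for c
    proof -
      obtain d where d: "d > 0" "\<forall>c'\<in>?S. dist c' c < d \<longrightarrow> dist (H (A,c) (A,c')) (H (A,c) (A,c)) < H (A,c) (A,c)"
        using cont[of "(A,c)" A, unfolded continuous_on_iff] c pos[of "(A,c)"] by (metis mem_Collect_eq)
      then show ?thesis by (intro exI[of _ d]) (auto simp: dist_real_def)
    qed
    then obtain d where d: "\<forall>c\<in>?S. d c > 0 \<and> (\<forall>c'\<in>?S. dist c' c < d c \<longrightarrow> H (A,c) (A,c') > 0)"
      by metis
    have "?S \<subseteq> (\<Union>c\<in>?S. ball c (d c))"
      using d by (auto intro!: bexI)
    then obtain C where C: "C \<subseteq> ?S" "finite C" "?S \<subseteq> (\<Union>c\<in>C. ball c (d c))"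
      using compactE_image[OF compact_colourings[OF K], of ?S "\<lambda>c. ball c (d c)"] by auto
    have "\<exists>c\<in>C. H (A,c) (A,c') > 0" if c': "c' \<in> ?S" for c'
    proof -
      obtain c where c: "c \<in> C" "c' \<in> ball c (d c)" using C(3) c' by blast
      then show ?thesis using d C(1) c' by (intro bexI[OF _ c(1)]) (auto simp: dist_commute)
    qed
    then show ?thesis using C(1,2) by blast
  qed
  then obtain C where C: "\<forall>A. finite (C A) \<and> C A \<subseteq> {c. is_graph K (A,c)} \<and>
      (\<forall>c'\<in>{c. is_graph K (A,c)}. \<exists>c\<in>C A. H (A,c) (A,c') > 0)"
    by metis
  let ?Y = "\<Union>A. (\<lambda>c. (A,c)) ` C A"
  have "\<exists>y\<in>?Y. H y x > 0" if x_graph: "is_graph K x" for x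
  proof -
    obtain A c where x: "x = (A,c)" by fastforce
    then have "c \<in> {c. is_graph K (A,c)}" using x_graph by simp
    then obtain c0 where "c0 \<in> C A" "H (A,c0) (A,c) > 0" using C by blast
    then show ?thesis unfolding x by blast
  qed
  moreover have "finite ?Y" "?Y \<subseteq> {G. is_graph K G}" using C by auto
  ultimately show ?thesis by blast
qed

lemma finite_positive_cover_rooted_graphs:
  fixes K :: "(real^'l::finite) set" and H :: "('n::finite,'l) graph \<times> 'n \<Rightarrow> ('n,'l) graph \<times> 'n \<Rightarrow> real"
  assumes K: "compact K"
    and pos: "\<And>y. is_graph K (fst y) \<Longrightarrow> H y y > 0"
    and cont: "\<And>y A v. is_graph K (fst y) \<Longrightarrow> continuous_on {c. is_graph K (A,c)} (\<lambda>c. H y ((A,c),v))"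
  shows "\<exists>Y. finite Y \<and> Y \<subseteq> {x. is_graph K (fst x)} \<and> (\<forall>x\<in>{x. is_graph K (fst x)}. \<exists>y\<in>Y. H y x > 0)"
proof -
  have "\<exists>Y. finite Y \<and> Y \<subseteq> {G. is_graph K G} \<and> (\<forall>x\<in>{G. is_graph K G}. \<exists>y\<in>Y. H (y,v) (x,v) > 0)" for v
    by (rule finite_positive_cover_graphs[OF K]) (use pos cont in auto)
  then obtain Y where Y: "\<forall>v. finite (Y v) \<and> Y v \<subseteq> {G. is_graph K G} \<and>
      (\<forall>x\<in>{G. is_graph K G}. \<exists>y\<in>Y v. H (y,v) (x,v) > 0)"
    by metis
  let ?Z = "\<Union>v. (\<lambda>y. (y,v)) ` Y v"
  have "\<exists>y\<in>?Z. H y x > 0" if x_graph: "is_graph K (fst x)" for x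
  proof -
    obtain G v where x: "x = (G,v)" by fastforce
    then have "is_graph K G" using x_graph by simp
    then obtain y where "y \<in> Y v" "H (y,v) (G,v) > 0" using Y by blast
    then show ?thesis unfolding x by blast
  qed
  moreover have "finite ?Z" "?Z \<subseteq> {x. is_graph K (fst x)}" using Y by (auto simp: subset_iff)
  ultimately show ?thesis by blast
qed

section \<open>A lattice Stone--Weierstrass theorem\<close>

text \<open>The predicate \<open>cc\<close> plays the role of continuity, and \<open>finite_positive_cover\<close> is
  compactness of \<open>X\<close>: the neighbourhoods \<open>{x. H y x > 0}\<close> of the points \<open>y\<close> have a finite
  subcover.\<close>

locale lattice_family =
  fixes X :: "'x set" and val :: "'f \<Rightarrow> 'x \<Rightarrow> real" and F :: "'f set"
    and cc :: "('x \<Rightarrow> real) \<Rightarrow> bool"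
  assumes finite_positive_cover: "\<And>H. \<forall>y\<in>X. H y y > 0 \<and> cc (H y) \<Longrightarrow>
      \<exists>Y. finite Y \<and> Y \<subseteq> X \<and> (\<forall>x\<in>X. \<exists>y\<in>Y. H y x > 0)"
    and cc_val: "\<And>\<phi>. \<phi> \<in> F \<Longrightarrow> cc (val \<phi>)"
    and cc_diff_add_const: "\<And>g h e. cc g \<Longrightarrow> cc h \<Longrightarrow> cc (\<lambda>x. g x - h x + e)"
    and const_in: "\<And>c. \<exists>\<phi>\<in>F. \<forall>x\<in>X. val \<phi> x = c"
    and affine_in: "\<And>\<phi> a b. \<phi> \<in> F \<Longrightarrow> \<exists>\<psi>\<in>F. \<forall>x\<in>X. val \<psi> x = a * val \<phi> x + b"
    and max_in: "\<And>\<phi> \<psi>. \<phi> \<in> F \<Longrightarrow> \<psi> \<in> F \<Longrightarrow> \<exists>\<theta>\<in>F. \<forall>x\<in>X. val \<theta> x = max (val \<phi> x) (val \<psi> x)"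
    and min_in: "\<And>\<phi> \<psi>. \<phi> \<in> F \<Longrightarrow> \<psi> \<in> F \<Longrightarrow> \<exists>\<theta>\<in>F. \<forall>x\<in>X. val \<theta> x = min (val \<phi> x) (val \<psi> x)"
begin

lemma pointwise_Min_in:
  "finite Y \<Longrightarrow> Y \<noteq> {} \<Longrightarrow> (\<And>y. y \<in> Y \<Longrightarrow> g y \<in> F) \<Longrightarrow>
     \<exists>\<theta>\<in>F. \<forall>x\<in>X. val \<theta> x = Min ((\<lambda>y. val (g y) x) ` Y)"
proof (induction Y rule: finite_ne_induct)
  case (insert y Y)
  then obtain \<theta> where "\<theta> \<in> F" "\<forall>x\<in>X. val \<theta> x = Min ((\<lambda>y. val (g y) x) ` Y)" by auto
  moreover obtain \<theta>' where "\<theta>' \<in> F" "\<forall>x\<in>X. val \<theta>' x = min (val (g y) x) (val \<theta> x)"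
    using min_in[of "g y" \<theta>] insert.prems calculation(1) by auto
  ultimately show ?case using insert.hyps by (intro bexI[of _ \<theta>']) auto
qed auto

lemma pointwise_Max_in:
  "finite Y \<Longrightarrow> Y \<noteq> {} \<Longrightarrow> (\<And>y. y \<in> Y \<Longrightarrow> g y \<in> F) \<Longrightarrow>
     \<exists>\<theta>\<in>F. \<forall>x\<in>X. val \<theta> x = Max ((\<lambda>y. val (g y) x) ` Y)"
proof (induction Y rule: finite_ne_induct)
  case (insert y Y)
  then obtain \<theta> where "\<theta> \<in> F" "\<forall>x\<in>X. val \<theta> x = Max ((\<lambda>y. val (g y) x) ` Y)" by auto
  moreover obtain \<theta>' where "\<theta>' \<in> F" "\<forall>x\<in>X. val \<theta>' x = max (val (g y) x) (val \<theta> x)"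
    using max_in[of "g y" \<theta>] insert.prems calculation(1) by auto
  ultimately show ?case using insert.hyps by (intro bexI[of _ \<theta>']) auto
qed auto

lemma interpolate_two_points:
  assumes x: "x \<in> X" and y: "y \<in> X" and sep: "f x \<noteq> f y \<Longrightarrow> \<exists>\<phi>\<in>F. val \<phi> x \<noteq> val \<phi> y"
  shows "\<exists>g\<in>F. val g x = f x \<and> val g y = f y"
proof (cases "f x = f y")
  case True
  then show ?thesis using const_in[of "f x"] x y by metis
next
  case False
  then obtain \<phi> where \<phi>: "\<phi> \<in> F" "val \<phi> x \<noteq> val \<phi> y" using sep by blast
  define a where "a = (f x - f y) / (val \<phi> x - val \<phi> y)"
  obtain \<psi> where \<psi>: "\<psi> \<in> F" "\<forall>z\<in>X. val \<psi> z = a * val \<phi> z + (f x - a * val \<phi> x)"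
    using affine_in[OF \<phi>(1)] by blast
  have "a * (val \<phi> x - val \<phi> y) = f x - f y"
    unfolding a_def using \<phi>(2) by simp
  then show ?thesis using \<psi> x y by (intro bexI[of _ \<psi>]) (auto simp: algebra_simps)
qed

context
  fixes f :: "'x \<Rightarrow> real" and e :: real
  assumes cc_f: "cc f" and e: "e > 0"
    and separates: "\<And>x y. x \<in> X \<Longrightarrow> y \<in> X \<Longrightarrow> f x \<noteq> f y \<Longrightarrow> \<exists>\<phi>\<in>F. val \<phi> x \<noteq> val \<phi> y"
begin

text \<open>The minimum over a finite subcover of functions interpolating \<open>f\<close> at \<open>x\<close> and at
  a second point.\<close>

lemma exact_at_below_plus:
  assumes x: "x \<in> X"
  shows "\<exists>\<psi>\<in>F. val \<psi> x = f x \<and> (\<forall>z\<in>X. val \<psi> z < f z + e)"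
proof -
  have "\<exists>g\<in>F. val g x = f x \<and> val g y = f y" if "y \<in> X" for y
    by (rule interpolate_two_points[OF x that separates[OF x that]])
  then have "\<forall>y\<in>X. \<exists>g. g \<in> F \<and> val g x = f x \<and> val g y = f y"
    by blast
  then obtain g where g: "\<forall>y\<in>X. g y \<in> F \<and> val (g y) x = f x \<and> val (g y) y = f y"
    by (rule bchoice[elim_format]) blast
  define H where "H y z = f z - val (g y) z + e" for y z
  have "H y y > 0 \<and> cc (H y)" if "y \<in> X" for y
    using g that e cc_val[of "g y"] cc_diff_add_const[OF cc_f, of "val (g y)" e]
    unfolding H_def by simp
  then have "\<exists>Y. finite Y \<and> Y \<subseteq> X \<and> (\<forall>z\<in>X. \<exists>y\<in>Y. H y z > 0)"
    by (intro finite_positive_cover ballI)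
  then obtain Y where Y: "finite Y" "Y \<subseteq> X" "\<forall>z\<in>X. \<exists>y\<in>Y. H y z > 0"
    by blast
  have Yne: "Y \<noteq> {}" using Y(3) x by auto
  obtain \<theta> where \<theta>: "\<theta> \<in> F" "\<forall>z\<in>X. val \<theta> z = Min ((\<lambda>y. val (g y) z) ` Y)"
    using pointwise_Min_in[OF Y(1) Yne, of g] g Y(2) by auto
  have "(\<lambda>y. val (g y) x) ` Y = {f x}" using g Y(2) Yne by force
  then have "val \<theta> x = f x" using \<theta>(2) x by simp
  moreover have "val \<theta> z < f z + e" if z: "z \<in> X" for z
  proof -
    obtain y where y: "y \<in> Y" "H y z > 0" using Y(3) z by blast
    have "Min ((\<lambda>y. val (g y) z) ` Y) \<le> val (g y) z"
      using Y(1) y(1) by (intro Min_le) auto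
    then show ?thesis using \<theta>(2) z y(2) unfolding H_def by auto
  qed
  ultimately show ?thesis using \<theta>(1) by blast
qed

text \<open>The maximum over a finite subcover of the functions from \<open>exact_at_below_plus\<close>.\<close>

theorem uniform_approximation: "\<exists>\<phi>\<in>F. \<forall>x\<in>X. \<bar>val \<phi> x - f x\<bar> < e"
proof (cases "X = {}")
  case True
  then show ?thesis using const_in[of 0] by auto
next
  case False
  have "\<forall>x\<in>X. \<exists>\<psi>. \<psi> \<in> F \<and> val \<psi> x = f x \<and> (\<forall>z\<in>X. val \<psi> z < f z + e)"
    using exact_at_below_plus by blast
  then obtain \<psi> where \<psi>: "\<forall>x\<in>X. \<psi> x \<in> F \<and> val (\<psi> x) x = f x \<and> (\<forall>z\<in>X. val (\<psi> x) z < f z + e)"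
    by (rule bchoice[elim_format]) blast
  define H where "H x z = val (\<psi> x) z - f z + e" for x z
  have "H x x > 0 \<and> cc (H x)" if "x \<in> X" for x
    using \<psi> that e cc_val[of "\<psi> x"] cc_diff_add_const[OF _ cc_f, of "val (\<psi> x)" e]
    unfolding H_def by simp
  then have "\<exists>W. finite W \<and> W \<subseteq> X \<and> (\<forall>z\<in>X. \<exists>x\<in>W. H x z > 0)"
    by (intro finite_positive_cover ballI)
  then obtain W where W: "finite W" "W \<subseteq> X" "\<forall>z\<in>X. \<exists>x\<in>W. H x z > 0"
    by blast
  have Wne: "W \<noteq> {}" using W(3) False by auto
  obtain \<theta> where \<theta>: "\<theta> \<in> F" "\<forall>z\<in>X. val \<theta> z = Max ((\<lambda>x. val (\<psi> x) z) ` W)"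
    using pointwise_Max_in[OF W(1) Wne, of \<psi>] \<psi> W(2) by auto
  have "\<bar>val \<theta> z - f z\<bar> < e" if z: "z \<in> X" for z
  proof -
    obtain x where x: "x \<in> W" "H x z > 0" using W(3) z by blast
    have "val (\<psi> x) z \<le> Max ((\<lambda>x. val (\<psi> x) z) ` W)"
      using W(1) x(1) by (intro Max_ge) auto
    then have lo: "val \<theta> z > f z - e" using \<theta>(2) z x(2) unfolding H_def by auto
    have "Max ((\<lambda>x. val (\<psi> x) z) ` W) \<in> (\<lambda>x. val (\<psi> x) z) ` W"
      using W(1) Wne by (intro Max_in) auto
    then obtain x' where "x' \<in> W" "val \<theta> z = val (\<psi> x') z" using \<theta>(2) z by auto
    then have "val \<theta> z < f z + e" using \<psi> W(2) z by auto
    with lo show ?thesis by auto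
  qed
  then show ?thesis using \<theta>(1) by blast
qed

end

definition vec_family :: "('x \<Rightarrow> real^'d::finite) set" where
  "vec_family = {f. \<exists>\<phi> :: 'd \<Rightarrow> 'f. (\<forall>i. \<phi> i \<in> F) \<and> (\<forall>x\<in>X. f x = (\<chi> i. val (\<phi> i) x))}"

lemma uniform_limit_vec_family:
  fixes f :: "'x \<Rightarrow> real^'d::finite"
  assumes cc_f: "\<And>i. cc (\<lambda>x. f x $ i)"
    and separates: "\<And>x y. x \<in> X \<Longrightarrow> y \<in> X \<Longrightarrow> f x \<noteq> f y \<Longrightarrow> \<exists>\<phi>\<in>F. val \<phi> x \<noteq> val \<phi> y"
  shows "\<exists>S. (\<forall>j. S j \<in> vec_family) \<and> uniform_limit X S f sequentially"
proof -
  define \<epsilon> where "\<epsilon> j = inverse (real (Suc j)) / real CARD('d)" for j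
  have "\<exists>\<phi>\<in>F. \<forall>x\<in>X. \<bar>val \<phi> x - f x $ i\<bar> < \<epsilon> j" for j i
    by (rule uniform_approximation[OF cc_f]) (auto simp: \<epsilon>_def dest: separates)
  then have "\<forall>j i. \<exists>\<phi>. \<phi> \<in> F \<and> (\<forall>x\<in>X. \<bar>val \<phi> x - f x $ i\<bar> < \<epsilon> j)"
    by blast
  then obtain \<Phi> where \<Phi>: "\<forall>j i. \<Phi> j i \<in> F \<and> (\<forall>x\<in>X. \<bar>val (\<Phi> j i) x - f x $ i\<bar> < \<epsilon> j)"
    unfolding choice_iff by blast
  define S where "S j x = (\<chi> i. val (\<Phi> j i) x)" for j x
  have "S j \<in> vec_family" for j
    using \<Phi> unfolding vec_family_def S_def by blast
  moreover have "uniform_limit X S f sequentially"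
  proof (rule uniform_limitI)
    fix e :: real assume e: "e > 0"
    obtain N where N: "inverse (real (Suc N)) < e"
      using reals_Archimedean[OF e] by auto
    have "dist (S n x) (f x) < e" if "n \<ge> N" "x \<in> X" for n x
    proof -
      have "dist (S n x) (f x) \<le> (\<Sum>i\<in>UNIV. \<bar>(S n x - f x) $ i\<bar>)"
        unfolding dist_norm by (rule norm_le_l1_cart)
      also have "\<dots> < (\<Sum>i\<in>(UNIV::'d set). \<epsilon> n)"
        using \<Phi> \<open>x \<in> X\<close> by (intro sum_strict_mono) (auto simp: S_def)
      also have "\<dots> = inverse (real (Suc n))" by (simp add: \<epsilon>_def)
      also have "\<dots> \<le> inverse (real (Suc N))" using \<open>n \<ge> N\<close> by (simp add: le_imp_inverse_le)
      finally show ?thesis using N by linarith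
    qed
    then show "\<forall>\<^sub>F n in sequentially. \<forall>x\<in>X. dist (S n x) (f x) < e"
      unfolding eventually_sequentially by blast
  qed
  ultimately show ?thesis by blast
qed

end

lemma uniform_limit_respects:
  assumes "uniform_limit X S h sequentially" "x \<in> X" "y \<in> X" "\<And>j. S j x = S j y"
  shows "h x = h y"
proof -
  have "(\<lambda>j. S j y) \<longlonglongrightarrow> h x"
    using tendsto_uniform_limitI[OF assms(1,2)] assms(4) by simp
  moreover have "(\<lambda>j. S j y) \<longlonglongrightarrow> h y"
    using tendsto_uniform_limitI[OF assms(1,3)] .
  ultimately show ?thesis by (rule LIMSEQ_unique)
qed

lemma (in lattice_family) uniform_closure_eq_respecting:
  fixes alg :: "'x \<Rightarrow> 'c" and C :: "('x \<Rightarrow> real^'d::finite) \<Rightarrow> bool"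
  assumes respects: "\<And>\<phi> x y. \<phi> \<in> F \<Longrightarrow> x \<in> X \<Longrightarrow> y \<in> X \<Longrightarrow> alg x = alg y \<Longrightarrow> val \<phi> x = val \<phi> y"
    and separates: "\<And>x y. x \<in> X \<Longrightarrow> y \<in> X \<Longrightarrow> alg x \<noteq> alg y \<Longrightarrow> \<exists>\<phi>\<in>F. val \<phi> x \<noteq> val \<phi> y"
    and C_cc: "\<And>f i. C f \<Longrightarrow> cc (\<lambda>x. f x $ i)"
  shows "{h. C h \<and> (\<exists>S. (\<forall>j. S j \<in> vec_family) \<and> uniform_limit X S h sequentially)}
    = {f. C f \<and> (\<forall>x\<in>X. \<forall>y\<in>X. alg x = alg y \<longrightarrow> f x = f y)}"
proof (rule set_eqI, rule iffI)
  fix h :: "'x \<Rightarrow> real^'d"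
  assume "h \<in> {h. C h \<and> (\<exists>S. (\<forall>j. S j \<in> vec_family) \<and> uniform_limit X S h sequentially)}"
  then have "C h" and "\<exists>S. (\<forall>j. S j \<in> vec_family) \<and> uniform_limit X S h sequentially"
    by simp_all
  then obtain S where h: "C h" "\<forall>j. S j \<in> vec_family" "uniform_limit X S h sequentially"
    by (elim exE conjE) (rule that)
  have "h x = h y" if "x \<in> X" "y \<in> X" "alg x = alg y" for x y
  proof (rule uniform_limit_respects[OF h(3) that(1,2)])
    fix j
    obtain \<phi> :: "'d \<Rightarrow> 'f" where "\<forall>i. \<phi> i \<in> F" "\<forall>x\<in>X. S j x = (\<chi> i. val (\<phi> i) x)"
      using h(2)[rule_format, of j] unfolding vec_family_def by (rule CollectE) blast
    then show "S j x = S j y" using that respects[OF _ that] by (simp add: vec_eq_iff)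
  qed
  then show "h \<in> {f. C f \<and> (\<forall>x\<in>X. \<forall>y\<in>X. alg x = alg y \<longrightarrow> f x = f y)}"
    using h(1) by blast
next
  fix f :: "'x \<Rightarrow> real^'d"
  assume "f \<in> {f. C f \<and> (\<forall>x\<in>X. \<forall>y\<in>X. alg x = alg y \<longrightarrow> f x = f y)}"
  then have f: "C f" "\<And>x y. x \<in> X \<Longrightarrow> y \<in> X \<Longrightarrow> alg x = alg y \<Longrightarrow> f x = f y"
    by blast+
  have "\<exists>S. (\<forall>j. S j \<in> vec_family) \<and> uniform_limit X S f sequentially"
  proof (rule uniform_limit_vec_family)
    show "cc (\<lambda>x. f x $ i)" for i using C_cc[OF f(1)] .
    show "\<exists>\<phi>\<in>F. val \<phi> x \<noteq> val \<phi> y" if "x \<in> X" "y \<in> X" "f x \<noteq> f y" for x y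
      using that f(2) separates[OF that(1,2)] by blast
  qed
  then show "f \<in> {h. C h \<and> (\<exists>S. (\<forall>j. S j \<in> vec_family) \<and> uniform_limit X S h sequentially)}"
    using f(1) by blast
qed

lemma lattice_family_if_App_closed:
  fixes val :: "'l tl \<Rightarrow> 'x \<Rightarrow> real"
  assumes cover: "\<And>H. \<forall>y\<in>X. H y y > 0 \<and> cc (H y) \<Longrightarrow>
      \<exists>Y. finite Y \<and> Y \<subseteq> X \<and> (\<forall>x\<in>X. \<exists>y\<in>Y. H y x > 0)"
    and cc_val: "\<And>\<phi>. \<phi> \<in> F \<Longrightarrow> cc (val \<phi>)"
    and cc_diff_add_const: "\<And>g h e. cc g \<Longrightarrow> cc h \<Longrightarrow> cc (\<lambda>x. g x - h x + e)"
    and base: "b \<in> F"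
    and App_in: "\<And>g as. as \<noteq> [] \<Longrightarrow> cont_arity (length as) g \<Longrightarrow> set as \<subseteq> F \<Longrightarrow> App g as \<in> F"
    and val_App: "\<And>g as x. val (App g as) x = g (map (\<lambda>a. val a x) as)"
  shows "lattice_family X val F cc"
proof
  fix c :: real
  have "App (\<lambda>_. c) [b] \<in> F" using base by (intro App_in) (simp_all add: cont_arity_const)
  then show "\<exists>\<phi>\<in>F. \<forall>x\<in>X. val \<phi> x = c" by (force simp: val_App)
next
  fix \<phi> a b assume "\<phi> \<in> F"
  then have "App (\<lambda>xs. a * xs ! 0 + b) [\<phi>] \<in> F" by (intro App_in) (simp_all add: cont_arity_affine)
  then show "\<exists>\<psi>\<in>F. \<forall>x\<in>X. val \<psi> x = a * val \<phi> x + b" by (force simp: val_App)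
next
  fix \<phi> \<psi> assume "\<phi> \<in> F" "\<psi> \<in> F"
  then have "App (\<lambda>xs. max (xs ! 0) (xs ! 1)) [\<phi>, \<psi>] \<in> F" by (intro App_in) (simp_all add: cont_arity_max)
  then show "\<exists>\<theta>\<in>F. \<forall>x\<in>X. val \<theta> x = max (val \<phi> x) (val \<psi> x)" by (force simp: val_App)
next
  fix \<phi> \<psi> assume "\<phi> \<in> F" "\<psi> \<in> F"
  then have "App (\<lambda>xs. min (xs ! 0) (xs ! 1)) [\<phi>, \<psi>] \<in> F" by (intro App_in) (simp_all add: cont_arity_min)
  then show "\<exists>\<theta>\<in>F. \<forall>x\<in>X. val \<theta> x = min (val \<phi> x) (val \<psi> x)" by (force simp: val_App)
qed (use cover cc_val cc_diff_add_const in blast)+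

lemma uclos1_rep1_eq:
  fixes K :: "(real^'l::finite) set" and L :: "'l tl set" and alg :: "('n::finite,'l) graph \<Rightarrow> 'n \<Rightarrow> 'c"
  assumes K: "compact K" and base: "EqI 1 1 \<in> L"
    and App_in: "\<And>g as. as \<noteq> [] \<Longrightarrow> cont_arity (length as) g \<Longrightarrow>
      (\<forall>a\<in>set as. a \<in> L \<and> fv a \<subseteq> {1}) \<Longrightarrow> App g as \<in> L"
    and ok: "\<And>\<phi>. \<phi> \<in> L \<Longrightarrow> omega_ok \<phi>"
    and respects: "\<And>\<phi> G v H w. \<phi> \<in> L \<Longrightarrow> fv \<phi> \<subseteq> {1} \<Longrightarrow> is_graph K G \<Longrightarrow> is_graph K H \<Longrightarrow>
        alg G v = alg H w \<Longrightarrow> sem G (\<lambda>_. v) \<phi> = sem H (\<lambda>_. w) \<phi>"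
    and separates: "\<And>G v H w. is_graph K G \<Longrightarrow> is_graph K H \<Longrightarrow> alg G v \<noteq> alg H w \<Longrightarrow>
        \<exists>\<phi>\<in>L. fv \<phi> \<subseteq> {1} \<and> sem G (\<lambda>_. v) \<phi> \<noteq> sem H (\<lambda>_. w) \<phi>"
  shows "uclos1 K (rep1 K L :: (('n,'l) graph \<times> 'n \<Rightarrow> real^'d::finite) set)
    = {f. cont1 K f \<and> rho1_sub K alg f}"
proof -
  define X where "X = {x :: ('n,'l) graph \<times> 'n. is_graph K (fst x)}"
  define F where "F = {\<phi>. \<phi> \<in> L \<and> fv \<phi> \<subseteq> {1}}"
  define val where "val \<phi> x = sem (fst x) (\<lambda>_. snd x) \<phi>" for \<phi> and x :: "('n,'l) graph \<times> 'n"
  define cc where "cc g \<longleftrightarrow> (\<forall>A v. continuous_on {c. is_graph K (A,c)} (\<lambda>c. g ((A,c),v)))"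
    for g :: "('n,'l) graph \<times> 'n \<Rightarrow> real"
  interpret lattice_family X val F cc
  proof (rule lattice_family_if_App_closed)
    fix H assume "\<forall>y\<in>X. 0 < H y y \<and> cc (H y)"
    then show "\<exists>Y. finite Y \<and> Y \<subseteq> X \<and> (\<forall>x\<in>X. \<exists>y\<in>Y. 0 < H y x)"
      unfolding X_def cc_def by (intro finite_positive_cover_rooted_graphs[OF K]) blast+
  qed (use base App_in ok in \<open>auto simp: F_def val_def cc_def subset_iff continuous_on_sem intro!: continuous_intros\<close>)
  have rep: "rep1 K L = vec_family"
    unfolding rep1_def vec_family_def unfolding X_def F_def val_def by (simp add: Ball_def split_paired_All)
  have rho: "(\<forall>x\<in>X. \<forall>y\<in>X. alg (fst x) (snd x) = alg (fst y) (snd y) \<longrightarrow> f x = f y) \<longleftrightarrow> rho1_sub K alg f"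
    for f :: "('n,'l) graph \<times> 'n \<Rightarrow> real^'d"
    unfolding rho1_sub_def X_def by (simp only: Ball_def mem_Collect_eq split_paired_All fst_conv snd_conv) blast
  have "uclos1 K (rep1 K L :: (('n,'l) graph \<times> 'n \<Rightarrow> real^'d) set)
      = {f. cont1 K f \<and> (\<forall>x\<in>X. \<forall>y\<in>X. alg (fst x) (snd x) = alg (fst y) (snd y) \<longrightarrow> f x = f y)}"
    unfolding uclos1_def rep X_def[symmetric]
  proof (rule uniform_closure_eq_respecting)
    show "val \<phi> x = val \<phi> y"
      if "\<phi> \<in> F" "x \<in> X" "y \<in> X" "alg (fst x) (snd x) = alg (fst y) (snd y)" for \<phi> x y
      using that respects unfolding F_def X_def val_def by blast
    show "\<exists>\<phi>\<in>F. val \<phi> x \<noteq> val \<phi> y"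
      if "x \<in> X" "y \<in> X" "alg (fst x) (snd x) \<noteq> alg (fst y) (snd y)" for x y
      using that separates unfolding F_def X_def val_def by blast
    show "cc (\<lambda>x. f x $ i)" if "cont1 K f" for f :: "('n,'l) graph \<times> 'n \<Rightarrow> real^'d" and i
      using that unfolding cont1_def cc_def by (auto intro: continuous_on_component)
  qed
  then show ?thesis using rho by blast
qed

lemma uclos0_rep0_eq:
  fixes K :: "(real^'l::finite) set" and L :: "'l tl set" and alg :: "('n::finite,'l) graph \<Rightarrow> 'c"
  assumes K: "compact K" and base: "b \<in> L" "fv b = {}"
    and App_in: "\<And>g as. as \<noteq> [] \<Longrightarrow> cont_arity (length as) g \<Longrightarrow>
      (\<forall>a\<in>set as. a \<in> L \<and> fv a = {}) \<Longrightarrow> App g as \<in> L"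
    and ok: "\<And>\<phi>. \<phi> \<in> L \<Longrightarrow> omega_ok \<phi>"
    and respects: "\<And>\<phi> G H. \<phi> \<in> L \<Longrightarrow> fv \<phi> = {} \<Longrightarrow> is_graph K G \<Longrightarrow> is_graph K H \<Longrightarrow>
        alg G = alg H \<Longrightarrow> sem G (\<lambda>_. undefined) \<phi> = sem H (\<lambda>_. undefined) \<phi>"
    and separates: "\<And>G H. is_graph K G \<Longrightarrow> is_graph K H \<Longrightarrow> alg G \<noteq> alg H \<Longrightarrow>
        \<exists>\<phi>\<in>L. fv \<phi> = {} \<and> sem G (\<lambda>_. undefined) \<phi> \<noteq> sem H (\<lambda>_. undefined) \<phi>"
  shows "uclos0 K (rep0 K L :: (('n,'l) graph \<Rightarrow> real^'d::finite) set)
    = {f. cont0 K f \<and> rho0_sub K alg f}"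
proof -
  define X where "X = {G :: ('n,'l) graph. is_graph K G}"
  define F where "F = {\<phi>. \<phi> \<in> L \<and> fv \<phi> = {}}"
  define val where "val \<phi> G = sem G (\<lambda>_. undefined) \<phi>" for \<phi> and G :: "('n,'l) graph"
  define cc where "cc g \<longleftrightarrow> (\<forall>A. continuous_on {c. is_graph K (A,c)} (\<lambda>c. g (A,c)))"
    for g :: "('n,'l) graph \<Rightarrow> real"
  interpret lattice_family X val F cc
  proof (rule lattice_family_if_App_closed)
    fix H assume "\<forall>y\<in>X. 0 < H y y \<and> cc (H y)"
    then show "\<exists>Y. finite Y \<and> Y \<subseteq> X \<and> (\<forall>x\<in>X. \<exists>y\<in>Y. 0 < H y x)"
      unfolding X_def cc_def by (intro finite_positive_cover_graphs[OF K]) blast+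
  qed (use base App_in ok in \<open>auto simp: F_def val_def cc_def subset_iff continuous_on_sem intro!: continuous_intros\<close>)
  have rep: "rep0 K L = vec_family"
    unfolding rep0_def vec_family_def unfolding X_def F_def val_def by (simp add: Ball_def)
  have "uclos0 K (rep0 K L :: (('n,'l) graph \<Rightarrow> real^'d) set)
      = {f. cont0 K f \<and> (\<forall>x\<in>X. \<forall>y\<in>X. alg x = alg y \<longrightarrow> f x = f y)}"
    unfolding uclos0_def rep X_def[symmetric]
  proof (rule uniform_closure_eq_respecting)
    show "val \<phi> x = val \<phi> y" if "\<phi> \<in> F" "x \<in> X" "y \<in> X" "alg x = alg y" for \<phi> x y
      using that respects unfolding F_def X_def val_def by blast
    show "\<exists>\<phi>\<in>F. val \<phi> x \<noteq> val \<phi> y" if "x \<in> X" "y \<in> X" "alg x \<noteq> alg y" for x y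
      using that separates unfolding F_def X_def val_def by blast
    show "cc (\<lambda>x. f x $ i)" if "cont0 K f" for f :: "('n,'l) graph \<Rightarrow> real^'d" and i
      using that unfolding cont0_def cc_def by (auto intro: continuous_on_component)
  qed
  then show ?thesis unfolding rho0_sub_def X_def by blast
qed


lemma cr_eq_mono: "cr t G v = cr t H w \<Longrightarrow> s \<le> t \<Longrightarrow> cr s G v = cr s H w"
  by (induction t) (auto simp: le_Suc_eq)

lemma colG_eq_if_cr_eq: "cr t G v = cr t H w \<Longrightarrow> colG G v = colG H w"
  using cr_eq_mono[of t G v H w 0] by simp

lemma wl_eq_mono: "wl k t G vs = wl k t H ws \<Longrightarrow> s \<le> t \<Longrightarrow> wl k s G vs = wl k s H ws"
  by (induction t) (auto simp: le_Suc_eq)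

lemma atp_eq_if_wl_eq: "wl k t G vs = wl k t H ws \<Longrightarrow> atp G vs = atp H ws"
  using wl_eq_mono[of k t G vs H ws 0] by simp

definition index_pairs :: "nat \<Rightarrow> (nat \<times> nat) list" where
  "index_pairs n = concat (map (\<lambda>i. map (\<lambda>j. (i, j)) [Suc i..<n]) [0..<n])"

lemma set_index_pairs: "set (index_pairs n) = {(i, j). i < j \<and> j < n}"
proof
  show "set (index_pairs n) \<subseteq> {(i, j). i < j \<and> j < n}" unfolding index_pairs_def by auto
  show "{(i, j). i < j \<and> j < n} \<subseteq> set (index_pairs n)"
  proof clarify
    fix a b assume "a < b" "b < n"
    then show "(a, b) \<in> set (index_pairs n)" unfolding index_pairs_def
      by (simp, intro bexI[of _ a]) auto
  qed
qed

lemma atp_index_pairs: "atp G vs = LAtp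
    (map (\<lambda>(i,j). (vs ! i = vs ! j, adjG G (vs ! i) (vs ! j))) (index_pairs (length vs)))
    (map (colG G) vs)"
  unfolding atp_def index_pairs_def by (simp add: map_concat o_def)

lemma atp_eq_iff: "atp G vs = atp H ws \<longleftrightarrow> length vs = length ws \<and>
   (\<forall>i j. i < j \<and> j < length vs \<longrightarrow> (vs ! i = vs ! j \<longleftrightarrow> ws ! i = ws ! j) \<and> (adjG G (vs ! i) (vs ! j) \<longleftrightarrow> adjG H (ws ! i) (ws ! j))) \<and>
   (\<forall>i < length vs. colG G (vs ! i) = colG H (ws ! i))"
  (is "?L \<longleftrightarrow> ?R")
proof
  assume L: ?L
  then have c: "map (colG G) vs = map (colG H) ws" and
    p: "map (\<lambda>(i,j). (vs ! i = vs ! j, adjG G (vs ! i) (vs ! j))) (index_pairs (length vs)) =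
        map (\<lambda>(i,j). (ws ! i = ws ! j, adjG H (ws ! i) (ws ! j))) (index_pairs (length ws))"
    unfolding atp_index_pairs by auto
  have len: "length vs = length ws" using c by (metis length_map)
  have "\<forall>x\<in>set (index_pairs (length vs)). (\<lambda>(i,j). (vs ! i = vs ! j, adjG G (vs ! i) (vs ! j))) x =
      (\<lambda>(i,j). (ws ! i = ws ! j, adjG H (ws ! i) (ws ! j))) x"
    using p unfolding len map_eq_conv by blast
  then have "\<forall>i j. i < j \<and> j < length vs \<longrightarrow> (vs ! i = vs ! j \<longleftrightarrow> ws ! i = ws ! j) \<and> (adjG G (vs ! i) (vs ! j) \<longleftrightarrow> adjG H (ws ! i) (ws ! j))"
    unfolding set_index_pairs len by auto
  moreover have "\<forall>i < length vs. colG G (vs ! i) = colG H (ws ! i)"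
    using c len by (metis nth_map)
  ultimately show ?R using len by blast
next
  assume R: ?R
  then have len: "length vs = length ws" by blast
  have "map (colG G) vs = map (colG H) ws"
    using R by (intro nth_equalityI) auto
  moreover have "map (\<lambda>(i,j). (vs ! i = vs ! j, adjG G (vs ! i) (vs ! j))) (index_pairs (length vs)) =
        map (\<lambda>(i,j). (ws ! i = ws ! j, adjG H (ws ! i) (ws ! j))) (index_pairs (length ws))"
    unfolding len[symmetric] by (rule map_cong[OF refl]) (use R in \<open>auto simp: set_index_pairs\<close>)
  ultimately show ?L unfolding atp_index_pairs by simp
qed

lemma is_graph_adj_sym: "is_graph K G \<Longrightarrow> adjG G u v = adjG G v u"
  by (simp add: is_graph_def)

lemma is_graph_adj_irrefl: "is_graph K G \<Longrightarrow> \<not> adjG G v v"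
  by (simp add: is_graph_def)

text \<open>Equal atomic types of \<open>map \<nu> qs\<close> and \<open>map \<mu> qs\<close> mean that the assignments \<open>\<nu>\<close> and \<open>\<mu>\<close>
  agree on all atoms over the variables in \<open>qs\<close>; symmetry and irreflexivity of the graphs
  cover the pairs that \<open>atp\<close> does not record.\<close>

lemma atp_eq_imp_atoms_eq:
  assumes e: "atp G (map \<nu> qs) = atp H (map \<mu> qs)" and G: "is_graph K G" and H: "is_graph K H"
    and a: "a \<in> set qs" and b: "b \<in> set qs"
  shows "(\<nu> a = \<nu> b \<longleftrightarrow> \<mu> a = \<mu> b) \<and> (adjG G (\<nu> a) (\<nu> b) \<longleftrightarrow> adjG H (\<mu> a) (\<mu> b))
    \<and> colG G (\<nu> a) = colG H (\<mu> a)"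
proof -
  obtain i where i: "i < length qs" "qs ! i = a" using a by (auto simp: in_set_conv_nth)
  obtain j where j: "j < length qs" "qs ! j = b" using b by (auto simp: in_set_conv_nth)
  note E = e[unfolded atp_eq_iff, simplified]
  have "(\<nu> a = \<nu> b \<longleftrightarrow> \<mu> a = \<mu> b) \<and> (adjG G (\<nu> a) (\<nu> b) \<longleftrightarrow> adjG H (\<mu> a) (\<mu> b))"
  proof (cases i j rule: linorder_cases)
    case less then show ?thesis using E i j by auto
  next
    case equal then show ?thesis using i j is_graph_adj_irrefl[OF G] is_graph_adj_irrefl[OF H] by auto
  next
    case greater
    then have "(\<nu> b = \<nu> a \<longleftrightarrow> \<mu> b = \<mu> a) \<and> (adjG G (\<nu> b) (\<nu> a) \<longleftrightarrow> adjG H (\<mu> b) (\<mu> a))"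
      using E i j by auto
    then show ?thesis using is_graph_adj_sym[OF G] is_graph_adj_sym[OF H] by metis
  qed
  moreover have "colG G (\<nu> a) = colG H (\<mu> a)" using E i by auto
  ultimately show ?thesis by blast
qed

section \<open>Soundness: formulas respect the labels\<close>

lemma sum_eq_if_image_mset_eq:
  assumes A: "finite A" and B: "finite B"
    and eq: "image_mset f (mset_set A) = image_mset g (mset_set B)"
    and pq: "\<And>a b. a \<in> A \<Longrightarrow> b \<in> B \<Longrightarrow> f a = g b \<Longrightarrow> p a = (q b :: 'r::comm_monoid_add)"
  shows "sum p A = sum q B"
proof -
  text \<open>Both sums factor through the common multiset of values.\<close>
  define P where "P x = q (SOME b. b \<in> B \<and> g b = x)" for x
  have imgs: "f ` A = g ` B"
  proof -
    have "set_mset (image_mset f (mset_set A)) = set_mset (image_mset g (mset_set B))" using eq by simp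
    then show ?thesis using A B by simp
  qed
  have p_factors: "p a = P (f a)" if a: "a \<in> A" for a
  proof -
    have "\<exists>b. b \<in> B \<and> g b = f a" using imgs a by (metis image_eqI imageE)
    then have "(SOME b. b \<in> B \<and> g b = f a) \<in> B \<and> g (SOME b. b \<in> B \<and> g b = f a) = f a"
      by (rule someI_ex)
    then show ?thesis unfolding P_def using pq a by metis
  qed
  have q_factors: "q b = P (g b)" if b: "b \<in> B" for b
  proof -
    obtain a where a: "a \<in> A" "f a = g b" using imgs b by (metis image_eqI imageE)
    have "\<exists>b'. b' \<in> B \<and> g b' = g b" using b by blast
    then have "(SOME b'. b' \<in> B \<and> g b' = g b) \<in> B \<and> g (SOME b'. b' \<in> B \<and> g b' = g b) = g b"
      by (rule someI_ex)
    then have "p a = P (g b)" unfolding P_def using pq[of a] a by metis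
    moreover have "p a = q b" using pq[OF a(1) b a(2)] .
    ultimately show ?thesis by simp
  qed
  have "sum p A = sum (\<lambda>a. P (f a)) A" using p_factors by (rule sum.cong[OF refl])
  also have "\<dots> = sum_mset (image_mset P (image_mset f (mset_set A)))"
    by (simp add: sum_unfold_sum_mset image_mset.compositionality o_def)
  also have "\<dots> = sum_mset (image_mset P (image_mset g (mset_set B)))" by (simp only: eq)
  also have "\<dots> = sum (\<lambda>b. P (g b)) B"
    by (simp add: sum_unfold_sum_mset image_mset.compositionality o_def)
  also have "\<dots> = sum q B" using q_factors by (intro sum.cong) auto
  finally show ?thesis .
qed

lemma sum_over_neighbours:
  "(\<Sum>u\<in>UNIV. (if adjG G v u then 1 else 0) * (f u :: real)) = (\<Sum>u\<in>{u. adjG G v u}. f u)"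
proof -
  have "(\<Sum>u\<in>UNIV. (if adjG G v u then 1 else 0) * f u) = (\<Sum>u\<in>UNIV. if adjG G v u then f u else 0)"
    by (intro sum.cong) auto
  also have "\<dots> = (\<Sum>u\<in>{u. adjG G v u}. f u)" by (simp add: sum.If_cases)
  finally show ?thesis .
qed

lemma fv_gtl: "gtl i \<phi> \<Longrightarrow> fv \<phi> = {i}"
proof (induction rule: gtl.induct)
  case (g_app as i g)
  then show ?case by (cases as) auto
qed auto

lemma sem_eq_if_cr_eq:
  assumes "gtl i \<phi>" "sdepth \<phi> \<le> t" "cr t G (\<nu> i) = cr t H (\<mu> i)"
  shows "sem G \<nu> \<phi> = sem H \<mu> \<phi>"
  using assms
proof (induction i \<phi> arbitrary: t \<nu> \<mu> rule: gtl.induct)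
  case (g_col i s) then show ?case using colG_eq_if_cr_eq[OF g_col.prems(2)] by simp
next
  case (g_mul i a b) then show ?case by (metis max.bounded_iff sdepth.simps(5) sem.simps(5))
next
  case (g_add i a b) then show ?case by (metis max.bounded_iff sdepth.simps(6) sem.simps(6))
next
  case (g_app as i g)
  then have "map (sem G \<nu>) as = map (sem H \<mu>) as" by (intro map_cong) auto
  then show ?case by (simp only: sem.simps)
next
  case (g_sum i j a)
  have ij: "i \<noteq> j" using g_sum.hyps(1) by auto
  obtain t' where t: "t = Suc t'" and da: "sdepth a \<le> t'"
    using g_sum.prems(1) by (cases t) auto
  have nbrs: "image_mset (cr t' G) (mset_set {u. adjG G (\<nu> i) u})
      = image_mset (cr t' H) (mset_set {u. adjG H (\<mu> i) u})"
    using g_sum.prems(2) unfolding t by simp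
  have "sem G \<nu> (Sum j (Mul (Edge i j) a)) = (\<Sum>u\<in>{u. adjG G (\<nu> i) u}. sem G (\<nu>(j := u)) a)"
    using ij by (simp add: sum_over_neighbours)
  also have "\<dots> = (\<Sum>u\<in>{u. adjG H (\<mu> i) u}. sem H (\<mu>(j := u)) a)"
    by (rule sum_eq_if_image_mset_eq[OF _ _ nbrs]) (auto intro: g_sum.IH[OF da])
  also have "\<dots> = sem H \<mu> (Sum j (Mul (Edge i j) a))"
    using ij by (simp add: sum_over_neighbours)
  finally show ?case .
qed simp_all


lemma exists_var_not_in_tuple:
  assumes "length ps = k"
  shows "\<exists>w\<in>{1..k+1}. w \<notin> set ps"
proof (rule ccontr)
  assume "\<not> ?thesis"
  then have "card {1..k+1} \<le> card (set ps)" by (intro card_mono) auto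
  moreover have "card (set ps) \<le> k" using assms card_length by metis
  ultimately show False by simp
qed

text \<open>A variable \<open>j\<close> can be brought into a \<open>k\<close>-tuple over \<open>{1..k+1}\<close> without losing the
  other variables of \<open>A\<close>: it replaces \<open>m\<close> if \<open>m\<close> occurs in the tuple, and otherwise, by
  pigeonhole, one of two equal entries.\<close>

lemma exists_update_covering:
  assumes ps: "length ps = k" "set ps \<subseteq> {1..k+1}" and k: "k \<ge> 1"
    and mj: "m \<in> {1..k+1}" "j \<in> {1..k+1}" "m \<noteq> j" "j \<notin> set ps"
    and A: "A \<subseteq> insert j (set ps - {m})"
  shows "\<exists>i<k. A \<subseteq> set (ps[i := j])"
proof -
  obtain i i' where ii: "i < k" "i' < k" "ps ! i' \<noteq> m \<longrightarrow> i \<noteq> i' \<and> ps ! i = ps ! i'"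
    "m \<in> set ps \<Longrightarrow> ps ! i = m"
  proof (cases "m \<in> set ps")
    case True
    then obtain i where "i < k" "ps ! i = m" using ps(1) by (auto simp: in_set_conv_nth)
    then show ?thesis using that by blast
  next
    case False
    have "set ps \<subseteq> {1..k+1} - {m, j}" using ps(2) False mj(4) by auto
    moreover have "card ({1..k+1} - {m, j}) = k - 1" using mj by (simp add: card_Diff_subset)
    ultimately have "card (set ps) \<le> k - 1" by (metis card_mono finite_Diff finite_atLeastAtMost)
    then have "\<not> distinct ps" using ps(1) k distinct_card by fastforce
    then obtain i i' where "i < k" "i' < k" "i \<noteq> i'" "ps ! i = ps ! i'"
      using ps(1) by (auto simp: distinct_conv_nth)
    then show ?thesis using that False by blast
  qed
  have "x \<in> set (ps[i := j])" if x: "x \<in> A" for x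
  proof (cases "x = j")
    case True then show ?thesis using ii(1) ps(1) by (simp add: set_update_memI)
  next
    case False
    then have "x \<in> set ps" "x \<noteq> m" using x A by auto
    then obtain l where l: "l < k" "ps ! l = x" "x \<noteq> m" using ps(1) by (auto simp: in_set_conv_nth)
    show ?thesis
    proof (cases "l = i")
      case True
      then show ?thesis using ii l ps(1) by (metis length_list_update nth_list_update_neq nth_mem)
    next
      case False
      then show ?thesis using l ps(1) by (metis length_list_update nth_list_update_neq nth_mem)
    qed
  qed
  then show ?thesis using ii(1) by blast
qed

lemma map_fun_upd_notin: "j \<notin> set ps \<Longrightarrow> map (\<nu>(j := u)) ps = map \<nu> ps"
  by (intro map_cong) auto

context
  fixes K :: "(real^'l::finite) set" and k :: nat and G H :: "('n::finite,'l) graph"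
  assumes k: "k \<ge> 1" and G: "is_graph K G" and H: "is_graph K H"
begin

text \<open>Soundness of \<open>k\<close>-WL for \<open>TL\<^sub>k\<^sub>+\<^sub>1\<close> is proved by simultaneous induction on the round
  \<open>s\<close> for formulas whose free variables lie in a \<open>k\<close>-tuple \<open>ps\<close> of variables, and for those
  with one extra variable \<open>j\<close>; the latter are what occurs below a summation.\<close>

lemma sem_eq_if_extension_eq:
  assumes C: "\<And>ps \<nu> \<mu> \<phi>. length ps = k \<Longrightarrow> set ps \<subseteq> {1..k+1} \<Longrightarrow>
      wl k s G (map \<nu> ps) = wl k s H (map \<mu> ps) \<Longrightarrow>
      vars \<phi> \<subseteq> {1..k+1} \<Longrightarrow> fv \<phi> \<subseteq> set ps \<Longrightarrow> sdepth \<phi> \<le> s \<Longrightarrow> sem G \<nu> \<phi> = sem H \<mu> \<phi>"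
    and ps: "length ps = k" "set ps \<subseteq> {1..k+1}" and j: "j \<in> {1..k+1}"
    and atp_eq: "atp G (map \<nu> (ps @ [j])) = atp H (map \<mu> (ps @ [j]))"
    and upd_eq: "\<forall>i<k. wl k s G (map \<nu> (ps[i := j])) = wl k s H (map \<mu> (ps[i := j]))"
    and wl_eq: "wl k s G (map \<nu> ps) = wl k s H (map \<mu> ps)"
  shows "vars \<psi> \<subseteq> {1..k+1} \<Longrightarrow> fv \<psi> \<subseteq> set ps \<union> {j} \<Longrightarrow> sdepth \<psi> \<le> s \<Longrightarrow>
    sem G \<nu> \<psi> = sem H \<mu> \<psi>"
proof (induction \<psi>)
  case (App g as)
  have "map (sem G \<nu>) as = map (sem H \<mu>) as"
    by (intro map_cong refl App.IH) (use App.prems in auto)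
  then show ?case by (simp only: sem.simps)
next
  case (Sum m \<gamma>)
  have "\<exists>ps'. length ps' = k \<and> set ps' \<subseteq> {1..k+1} \<and> fv (Sum m \<gamma>) \<subseteq> set ps' \<and>
      wl k s G (map \<nu> ps') = wl k s H (map \<mu> ps')"
  proof (cases "j \<in> fv (Sum m \<gamma>) \<and> j \<notin> set ps")
    case False
    then have "fv (Sum m \<gamma>) \<subseteq> set ps" using Sum.prems(2) by auto
    then show ?thesis using ps wl_eq by blast
  next
    case True
    then have "m \<noteq> j" by auto
    then obtain i where "i < k" "fv (Sum m \<gamma>) \<subseteq> set (ps[i := j])"
      using exists_update_covering[OF ps k _ j _ _, of m "fv (Sum m \<gamma>)"] True Sum.prems(1,2)
      by auto
    moreover have "length (ps[i := j]) = k" "set (ps[i := j]) \<subseteq> {1..k+1}"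
      using ps j set_update_subset_insert[of ps i j] by auto
    ultimately show ?thesis using upd_eq by blast
  qed
  then show ?case using C Sum.prems by blast
qed (use atp_eq_imp_atoms_eq[OF atp_eq G H] in auto)

context
  fixes s :: nat
  assumes D: "\<And>s' ps j \<nu> \<mu> \<psi>. s = Suc s' \<Longrightarrow> length ps = k \<Longrightarrow> set ps \<subseteq> {1..k+1} \<Longrightarrow>
      j \<in> {1..k+1} \<Longrightarrow> atp G (map \<nu> (ps @ [j])) = atp H (map \<mu> (ps @ [j])) \<Longrightarrow>
      (\<forall>i<k. wl k s' G (map \<nu> (ps[i := j])) = wl k s' H (map \<mu> (ps[i := j]))) \<Longrightarrow>
      wl k s' G (map \<nu> ps) = wl k s' H (map \<mu> ps) \<Longrightarrow>
      vars \<psi> \<subseteq> {1..k+1} \<Longrightarrow> fv \<psi> \<subseteq> set ps \<union> {j} \<Longrightarrow> sdepth \<psi> \<le> s' \<Longrightarrow> sem G \<nu> \<psi> = sem H \<mu> \<psi>"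
begin

lemma sem_Sum_eq_if_wl_Suc_eq:
  assumes s: "s = Suc s'"
    and ps: "length ps = k" "set ps \<subseteq> {1..k+1}"
    and wl_eq: "wl k s G (map \<nu> ps) = wl k s H (map \<mu> ps)"
    and j: "j \<notin> set ps" "j \<in> {1..k+1}"
    and \<psi>: "vars \<psi> \<subseteq> {1..k+1}" "fv \<psi> \<subseteq> set ps \<union> {j}" "sdepth \<psi> \<le> s'"
  shows "sem G \<nu> (Sum j \<psi>) = sem H \<mu> (Sum j \<psi>)"
proof -
  let ?vs = "map \<nu> ps" and ?ws = "map \<mu> ps"
  have "(\<Sum>u\<in>UNIV. sem G (\<nu>(j := u)) \<psi>) = (\<Sum>u\<in>UNIV. sem H (\<mu>(j := u)) \<psi>)"
  proof (rule sum_eq_if_image_mset_eq)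
    show "image_mset (\<lambda>u. LTup (atp G (?vs @ [u]) # map (\<lambda>i. wl k s' G (?vs[i := u])) [0..<k])) (mset_set UNIV) =
        image_mset (\<lambda>u. LTup (atp H (?ws @ [u]) # map (\<lambda>i. wl k s' H (?ws[i := u])) [0..<k])) (mset_set UNIV)"
      using wl_eq unfolding s by simp
  next
    fix u u'
    assume "LTup (atp G (?vs @ [u]) # map (\<lambda>i. wl k s' G (?vs[i := u])) [0..<k]) =
        LTup (atp H (?ws @ [u']) # map (\<lambda>i. wl k s' H (?ws[i := u'])) [0..<k])"
    then have "atp G (map (\<nu>(j := u)) (ps @ [j])) = atp H (map (\<mu>(j := u')) (ps @ [j]))"
      and "\<forall>i<k. wl k s' G (map (\<nu>(j := u)) (ps[i := j])) = wl k s' H (map (\<mu>(j := u')) (ps[i := j]))"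
      and "wl k s' G (map (\<nu>(j := u)) ps) = wl k s' H (map (\<mu>(j := u')) ps)"
      using wl_eq unfolding s by (auto simp: map_fun_upd_notin[OF j(1)] map_update map_eq_conv)
    then show "sem G (\<nu>(j := u)) \<psi> = sem H (\<mu>(j := u')) \<psi>"
      using D[OF s] ps j(2) \<psi> by blast
  qed auto
  then show ?thesis by simp
qed

lemma sem_eq_if_wl_eq_step:
  assumes ps: "length ps = k" "set ps \<subseteq> {1..k+1}"
    and wl_eq: "wl k s G (map \<nu> ps) = wl k s H (map \<mu> ps)"
  shows "vars \<phi> \<subseteq> {1..k+1} \<Longrightarrow> fv \<phi> \<subseteq> set ps \<Longrightarrow> sdepth \<phi> \<le> s \<Longrightarrow> sem G \<nu> \<phi> = sem H \<mu> \<phi>"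
proof (induction \<phi>)
  case (App g as)
  have "map (sem G \<nu>) as = map (sem H \<mu>) as"
    by (intro map_cong refl App.IH) (use App.prems in auto)
  then show ?case by (simp only: sem.simps)
next
  case (Sum j \<psi>)
  obtain s' where s: "s = Suc s'" and d\<psi>: "sdepth \<psi> \<le> s'" using Sum.prems(3) by (cases s) auto
  note Sum_eq = sem_Sum_eq_if_wl_Suc_eq[OF s ps wl_eq]
  have j: "j \<in> {1..k+1}" and v\<psi>: "vars \<psi> \<subseteq> {1..k+1}" and f\<psi>: "fv \<psi> \<subseteq> set ps \<union> {j}"
    using Sum.prems(1,2) by auto
  show ?case
  proof (cases "j \<in> set ps")
    case False
    then show ?thesis using Sum_eq j v\<psi> f\<psi> d\<psi> by blast
  next
    case True
    text \<open>The bound variable occurs in the tuple: rename it to a fresh one first.\<close>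
    obtain w where w: "w \<in> {1..k+1}" "w \<notin> set ps" using exists_var_not_in_tuple[OF ps(1)] by blast
    let ?\<psi> = "rename_vars (Transposition.transpose j w) \<psi>"
    have "vars ?\<psi> \<subseteq> {1..k+1}"
      unfolding vars_rename_vars using v\<psi> j w(1) by (auto simp: Transposition.transpose_def)
    moreover have "fv ?\<psi> \<subseteq> set ps \<union> {w}"
      unfolding fv_rename_vars[OF inj_transpose] using f\<psi> w(2)
      by (auto simp: Transposition.transpose_def)
    ultimately have "sem G \<nu> (Sum w ?\<psi>) = sem H \<mu> (Sum w ?\<psi>)"
      using Sum_eq w d\<psi> by simp
    moreover have "w \<notin> fv (Sum j \<psi>)" using w(2) Sum.prems(2) by auto
    ultimately show ?thesis using sem_Sum_rename_bound by metis
  qed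
qed (use atp_eq_imp_atoms_eq[OF atp_eq_if_wl_eq[OF wl_eq] G H] in auto)

end

lemma sem_eq_if_wl_eq:
  "length ps = k \<Longrightarrow> set ps \<subseteq> {1..k+1} \<Longrightarrow> wl k s G (map \<nu> ps) = wl k s H (map \<mu> ps) \<Longrightarrow>
    vars \<phi> \<subseteq> {1..k+1} \<Longrightarrow> fv \<phi> \<subseteq> set ps \<Longrightarrow> sdepth \<phi> \<le> s \<Longrightarrow> sem G \<nu> \<phi> = sem H \<mu> \<phi>"
proof (induction s arbitrary: ps \<nu> \<mu> \<phi>)
  case 0
  show ?case
    by (rule sem_eq_if_wl_eq_step[OF _ "0.prems"(1-3) "0.prems"(4-6)]) simp
next
  case (Suc s)
  show ?case
  proof (rule sem_eq_if_wl_eq_step[OF _ Suc.prems(1-3)])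
    fix s' ps j \<nu> \<mu> and \<psi> :: "'l tl"
    assume "Suc s = Suc s'"
      and prems: "length ps = k" "set ps \<subseteq> {1..k+1}" "j \<in> {1..k+1}"
      "atp G (map \<nu> (ps @ [j])) = atp H (map \<mu> (ps @ [j]))"
      "\<forall>i<k. wl k s' G (map \<nu> (ps[i := j])) = wl k s' H (map \<mu> (ps[i := j]))"
      "wl k s' G (map \<nu> ps) = wl k s' H (map \<mu> ps)"
      "vars \<psi> \<subseteq> {1..k+1}" "fv \<psi> \<subseteq> set ps \<union> {j}" "sdepth \<psi> \<le> s'"
    then have "s' = s" by simp
    show "sem G \<nu> \<psi> = sem H \<mu> \<psi>"
    proof (rule sem_eq_if_extension_eq[where s = s])
      fix ps \<nu> \<mu> and \<phi> :: "'l tl"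
      assume "length ps = k" "set ps \<subseteq> {1..k+1}" "wl k s G (map \<nu> ps) = wl k s H (map \<mu> ps)"
        "vars \<phi> \<subseteq> {1..k+1}" "fv \<phi> \<subseteq> set ps" "sdepth \<phi> \<le> s"
      then show "sem G \<nu> \<phi> = sem H \<mu> \<phi>" by (rule Suc.IH)
    qed (use prems \<open>s' = s\<close> in simp_all)
  qed (use Suc.prems in auto)
qed

lemma sem_eq_if_wl_extension_eq:
  assumes "length ps = k" "set ps \<subseteq> {1..k+1}" "j \<in> {1..k+1}"
    and "atp G (map \<nu> (ps @ [j])) = atp H (map \<mu> (ps @ [j]))"
    and "\<forall>i<k. wl k s G (map \<nu> (ps[i := j])) = wl k s H (map \<mu> (ps[i := j]))"
    and "wl k s G (map \<nu> ps) = wl k s H (map \<mu> ps)"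
    and "vars \<psi> \<subseteq> {1..k+1}" "fv \<psi> \<subseteq> set ps \<union> {j}" "sdepth \<psi> \<le> s"
  shows "sem G \<nu> \<psi> = sem H \<mu> \<psi>"
  by (rule sem_eq_if_extension_eq[OF _ assms(1-6) assms(7-9)]) (rule sem_eq_if_wl_eq)

end


lemma finite_tuples: "finite {vs :: 'a::finite list. length vs = n}"
  using finite_lists_length_eq[of "UNIV :: 'a set" n] by simp

fun initial_label :: "'c lab \<Rightarrow> 'c lab" where
  "initial_label (LPair a b) = initial_label a"
| "initial_label (LCol c) = LCol c"
| "initial_label (LAtp e c) = LAtp e c"
| "initial_label (LTup l) = LTup l"

fun is_diagonal :: "'c lab \<Rightarrow> bool" where
  "is_diagonal (LAtp e c) = (\<forall>p\<in>set e. fst p)"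
| "is_diagonal _ = False"

lemma initial_label_wl [simp]: "initial_label (wl k t G vs) = atp G vs"
  by (induction t) (auto simp: atp_def)

lemma is_diagonal_atp_iff:
  "is_diagonal (atp G vs) \<longleftrightarrow> (\<forall>i j. i < j \<and> j < length vs \<longrightarrow> vs ! i = vs ! j)"
  unfolding atp_index_pairs by (auto simp: set_index_pairs)

lemma all_nth_eq_iff_replicate:
  assumes "length vs = k" "k \<ge> 1"
  shows "(\<forall>i j. i < j \<and> j < length vs \<longrightarrow> vs ! i = vs ! j) \<longleftrightarrow> vs = replicate k (vs ! 0)"
proof
  assume a: "\<forall>i j. i < j \<and> j < length vs \<longrightarrow> vs ! i = vs ! j"
  show "vs = replicate k (vs ! 0)"
  proof (rule nth_equalityI)
    fix i assume "i < length vs"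
    then show "vs ! i = replicate k (vs ! 0) ! i"
      using a assms by (cases "i = 0") auto
  qed (use assms in simp)
next
  assume "vs = replicate k (vs ! 0)"
  then obtain c where "vs = replicate k c" by blast
  then show "\<forall>i j. i < j \<and> j < length vs \<longrightarrow> vs ! i = vs ! j" by simp
qed

text \<open>The constant tuples are recognisable from their labels alone, so equal
  \<open>gwl\<close>-multisets give equal multisets of \<open>vwl\<close>-labels.\<close>

lemma diagonal_part_gwl:
  assumes k: "k \<ge> 1"
  shows "filter_mset (\<lambda>l. is_diagonal (initial_label l)) (gwl k t (X :: ('n::finite,'l::finite) graph)) =
    image_mset (\<lambda>u. wl k t X (replicate k u)) (mset_set UNIV)"
proof -
  define TU where "TU = {vs :: 'n list. length vs = k}"
  have "filter_mset (\<lambda>vs. is_diagonal (initial_label (wl k t X vs))) (mset_set TU)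
      = mset_set {vs \<in> TU. is_diagonal (initial_label (wl k t X vs))}"
    using finite_tuples[of k] unfolding TU_def by (rule filter_mset_mset_set)
  also have "{vs \<in> TU. is_diagonal (initial_label (wl k t X vs))} = range (\<lambda>u::'n. replicate k u)"
    unfolding TU_def initial_label_wl is_diagonal_atp_iff
    using all_nth_eq_iff_replicate[OF _ k] by auto
  also have "mset_set (range (\<lambda>u::'n. replicate k u)) = image_mset (\<lambda>u. replicate k u) (mset_set UNIV)"
    using k by (intro image_mset_mset_set[symmetric]) (auto simp: inj_on_def replicate_eq_replicate)
  finally show ?thesis
    unfolding gwl_def TU_def[symmetric] by (simp add: filter_mset_image_mset image_mset.compositionality o_def)
qed

lemma sem_eq_if_gwl_eq:
  fixes K :: "(real^'l::finite) set" and G H :: "('n::finite,'l) graph"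
  assumes k: "k \<ge> 1" and G: "is_graph K G" and H: "is_graph K H" and e: "gwl k t G = gwl k t H"
  shows "vars \<phi> \<subseteq> {1..k+1} \<Longrightarrow> fv \<phi> = {} \<Longrightarrow> sdepth \<phi> \<le> Suc t \<Longrightarrow> sem G \<nu> \<phi> = sem H \<mu> \<phi>"
proof (induction \<phi> arbitrary: \<nu> \<mu>)
  case (App g as)
  have "map (sem G \<nu>) as = map (sem H \<mu>) as"
    by (intro map_cong refl App.IH) (use App.prems in auto)
  then show ?case by (simp only: sem.simps)
next
  case (Sum j \<psi>)
  have j: "j \<in> {1..k+1}" and v\<psi>: "vars \<psi> \<subseteq> {1..k+1}" and f\<psi>: "fv \<psi> \<subseteq> {j}"
    and d\<psi>: "sdepth \<psi> \<le> t"
    using Sum.prems by auto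
  have rs: "set (replicate k j) = {j}" using k by simp
  have "(\<Sum>u\<in>UNIV. sem G (\<lambda>_. u) \<psi>) = (\<Sum>u\<in>UNIV. sem H (\<lambda>_. u) \<psi>)"
  proof (rule sum_eq_if_image_mset_eq)
    show "image_mset (\<lambda>u. wl k t G (replicate k u)) (mset_set UNIV) =
        image_mset (\<lambda>u. wl k t H (replicate k u)) (mset_set UNIV)"
      using diagonal_part_gwl[OF k, of t G] diagonal_part_gwl[OF k, of t H] e by simp
  next
    fix u u' assume "wl k t G (replicate k u) = wl k t H (replicate k u')"
    then show "sem G (\<lambda>_. u) \<psi> = sem H (\<lambda>_. u') \<psi>"
      by (intro sem_eq_if_wl_eq[OF k G H, of "replicate k j"]) (use rs j v\<psi> f\<psi> d\<psi> in auto)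
  qed auto
  moreover have "sem G (\<nu>(j := u)) \<psi> = sem G (\<lambda>_. u) \<psi>" "sem H (\<mu>(j := u)) \<psi> = sem H (\<lambda>_. u) \<psi>" for u
    by (rule sem_cong_fv; use f\<psi> in auto)+
  ultimately show ?case by simp
next
  case (Mul a b)
  have "sem G \<nu> a = sem H \<mu> a" "sem G \<nu> b = sem H \<mu> b"
    using Mul.prems by (intro Mul.IH; simp)+
  then show ?case by simp
next
  case (Add a b)
  have "sem G \<nu> a = sem H \<mu> a" "sem G \<nu> b = sem H \<mu> b"
    using Add.prems by (intro Add.IH; simp)+
  then show ?case by simp
next
  case (Scale c a)
  have "sem G \<nu> a = sem H \<mu> a"
    using Scale.prems by (intro Scale.IH; simp)
  then show ?case by simp
qed simp_all


section \<open>Completeness: formulas separate the labels\<close>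

lemma count_image_mset_mset_set:
  assumes "finite A"
  shows "count (image_mset f (mset_set A)) x = card {a \<in> A. f a = x}"
proof -
  have "count (image_mset f (mset_set A)) x = (\<Sum>y\<in>f -` {x} \<inter> A. 1)"
    unfolding count_image_mset using assms by (intro sum.cong) auto
  also have "f -` {x} \<inter> A = {a \<in> A. f a = x}" by auto
  finally show ?thesis by simp
qed

locale label_separating =
  fixes P :: "'p set" and lab :: "'p \<Rightarrow> 'b" and val :: "'f \<Rightarrow> 'p \<Rightarrow> real" and F :: "'f set"
  assumes finite_P: "finite P"
    and F_nonempty: "F \<noteq> {}"
    and respects: "\<And>p q f. p \<in> P \<Longrightarrow> q \<in> P \<Longrightarrow> lab p = lab q \<Longrightarrow> f \<in> F \<Longrightarrow> val f p = val f q"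
    and separates: "\<And>p q. p \<in> P \<Longrightarrow> q \<in> P \<Longrightarrow> lab p \<noteq> lab q \<Longrightarrow> \<exists>f\<in>F. val f p \<noteq> val f q"
    and scale_in: "\<And>f c. f \<in> F \<Longrightarrow> \<exists>g\<in>F. \<forall>p\<in>P. val g p = c * val f p"
begin

text \<open>One function of \<open>F\<close> per label different from that of \<open>p\<^sub>0\<close>, scaled so that it moves by
  exactly \<open>1\<close> between \<open>p\<^sub>0\<close> and a point with that label, puts every such point outside the
  support of the bump at \<open>p\<^sub>0\<close>.\<close>

lemma bump_indicator:
  assumes p0: "p0 \<in> P"
  obtains fs where "fs \<noteq> []" "set fs \<subseteq> F"
    "\<And>p. p \<in> P \<Longrightarrow> bump (map (\<lambda>f. val f p0) fs) (map (\<lambda>f. val f p) fs) = (if lab p = lab p0 then 1 else 0)"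
proof -
  define Q where "Q = {q \<in> P. lab q \<noteq> lab p0}"
  have "\<exists>g. g \<in> F \<and> \<bar>val g q - val g p0\<bar> = 1" if q: "q \<in> Q" for q
  proof -
    obtain f where f: "f \<in> F" "val f q \<noteq> val f p0" using separates[of q p0] p0 q unfolding Q_def by auto
    obtain g where g: "g \<in> F" "\<forall>p\<in>P. val g p = (1 / \<bar>val f q - val f p0\<bar>) * val f p"
      using scale_in[OF f(1)] by blast
    have "val g q - val g p0 = (1 / \<bar>val f q - val f p0\<bar>) * (val f q - val f p0)"
      using g(2) q p0 unfolding Q_def by (simp only: right_diff_distrib mem_Collect_eq)
    then have "\<bar>val g q - val g p0\<bar> = 1" using f(2) by (simp add: abs_mult)
    then show ?thesis using g(1) by blast
  qed
  then obtain g where g: "\<forall>q\<in>Q. g q \<in> F \<and> \<bar>val (g q) q - val (g q) p0\<bar> = 1"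
    by metis
  obtain f0 where f0: "f0 \<in> F" using F_nonempty by blast
  obtain xs where xs: "set xs = Q" using finite_P finite_list[of Q] unfolding Q_def by auto
  define fs where "fs = f0 # map g xs"
  show ?thesis
  proof (rule that)
    show "fs \<noteq> []" "set fs \<subseteq> F" unfolding fs_def using f0 g xs by auto
    fix p assume p: "p \<in> P"
    show "bump (map (\<lambda>f. val f p0) fs) (map (\<lambda>f. val f p) fs) = (if lab p = lab p0 then 1 else 0)"
    proof (cases "lab p = lab p0")
      case True
      have eq: "map (\<lambda>f. val f p) fs = map (\<lambda>f. val f p0) fs"
        using respects[OF p p0 True] \<open>set fs \<subseteq> F\<close> by (intro map_cong) auto
      show ?thesis unfolding eq using True by simp
    next
      case False
      then have pQ: "p \<in> Q" using p unfolding Q_def by simp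
      then obtain n where n: "n < length xs" "xs ! n = p" using xs by (metis in_set_conv_nth)
      have "Suc n < length fs" "fs ! Suc n = g p" unfolding fs_def using n by simp_all
      then have "\<bar>map (\<lambda>f. val f p) fs ! Suc n - map (\<lambda>f. val f p0) fs ! Suc n\<bar> = 1"
        using g pQ by simp
      moreover have "\<bar>map (\<lambda>f. val f p) fs ! Suc n - map (\<lambda>f. val f p0) fs ! Suc n\<bar> \<le>
          (\<Sum>i<length fs. \<bar>map (\<lambda>f. val f p) fs ! i - map (\<lambda>f. val f p0) fs ! i\<bar>)"
        using \<open>Suc n < length fs\<close> by (intro member_le_sum) auto
      ultimately show ?thesis using False unfolding bump_def by simp
    qed
  qed
qed

lemma counting_separation:
  fixes a :: "'i \<Rightarrow> 'p" and b :: "'j \<Rightarrow> 'p"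
  assumes I: "finite I" "a ` I \<subseteq> P" and J: "finite J" "b ` J \<subseteq> P"
    and differ: "image_mset (lab \<circ> a) (mset_set I) \<noteq> image_mset (lab \<circ> b) (mset_set J)"
  obtains fs z where "fs \<noteq> []" "set fs \<subseteq> F" "length z = length fs"
    "(\<Sum>i\<in>I. bump z (map (\<lambda>f. val f (a i)) fs)) \<noteq> (\<Sum>j\<in>J. bump z (map (\<lambda>f. val f (b j)) fs))"
proof -
  have "\<exists>l. count (image_mset (lab \<circ> a) (mset_set I)) l \<noteq> count (image_mset (lab \<circ> b) (mset_set J)) l"
    using differ by (meson multiset_eqI)
  then obtain l where "count (image_mset (lab \<circ> a) (mset_set I)) l \<noteq> count (image_mset (lab \<circ> b) (mset_set J)) l"
    by blast
  then have l: "card {i \<in> I. lab (a i) = l} \<noteq> card {j \<in> J. lab (b j) = l}"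
    using I J by (simp add: count_image_mset_mset_set)
  have "{i \<in> I. lab (a i) = l} \<noteq> {} \<or> {j \<in> J. lab (b j) = l} \<noteq> {}"
  proof (rule ccontr)
    assume "\<not> ?thesis"
    then have "{i \<in> I. lab (a i) = l} = {}" "{j \<in> J. lab (b j) = l} = {}" by blast+
    with l show False by (simp only: card.empty)
  qed
  then obtain p0 where p0: "p0 \<in> P" "lab p0 = l"
    using I(2) J(2) by blast
  obtain fs where fs: "fs \<noteq> []" "set fs \<subseteq> F"
    "\<And>p. p \<in> P \<Longrightarrow> bump (map (\<lambda>f. val f p0) fs) (map (\<lambda>f. val f p) fs) = (if lab p = lab p0 then 1 else 0)"
    by (rule bump_indicator[OF p0(1)]) (rule that)
  let ?z = "map (\<lambda>f. val f p0) fs"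
  have count: "(\<Sum>i\<in>I'. bump ?z (map (\<lambda>f. val f (a' i)) fs)) = real (card {i \<in> I'. lab (a' i) = l})"
    if "finite I'" "a' ` I' \<subseteq> P" for I' :: "'k set" and a'
  proof -
    have "(\<Sum>i\<in>I'. bump ?z (map (\<lambda>f. val f (a' i)) fs)) = (\<Sum>i\<in>I'. if lab (a' i) = l then 1 else 0)"
      using that fs(3) p0(2) by (intro sum.cong) auto
    also have "\<dots> = real (card {i \<in> I'. lab (a' i) = l})"
      using sum.inter_filter[OF that(1), of "\<lambda>_. 1::real" "\<lambda>i. lab (a' i) = l"] by simp
    finally show ?thesis .
  qed
  show ?thesis
    by (rule that[OF fs(1,2), of ?z]) (use count[OF I] count[OF J] l in simp_all)
qed

end

lemma gtl_rename_vars_swap12: "gtl i \<phi> \<Longrightarrow> gtl (Transposition.transpose 1 2 i) (rename_vars (Transposition.transpose 1 2) \<phi>)"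
proof (induction rule: gtl.induct)
  case (g_app as i g)
  then show ?case by (auto intro!: gtl.g_app)
next
  case (g_sum i j a)
  have "{Transposition.transpose 1 2 i, Transposition.transpose 1 2 j} = {1, 2}"
    using g_sum.hyps(1) by (auto simp: Transposition.transpose_def doubleton_eq_iff)
  then show ?case using g_sum.IH by (simp add: gtl.g_sum)
qed (auto intro: gtl.intros simp: Transposition.transpose_def)

lemma sem_guarded_sum:
  assumes "\<And>f. f \<in> set fs \<Longrightarrow> fv f = {1}"
  shows "sem X (\<lambda>_. x) (Sum 2 (Mul (Edge 1 2) (App g (map (rename_vars (Transposition.transpose 1 2)) fs))))
    = (\<Sum>u\<in>{u. adjG X x u}. g (map (\<lambda>f. sem X (\<lambda>_. u) f) fs))"
proof -
  have "sem X ((\<lambda>_. x)(2 := u)) (rename_vars (Transposition.transpose 1 2) f) = sem X (\<lambda>_. u) f"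
    if "f \<in> set fs" for f u
    unfolding sem_rename_vars[OF inj_transpose] using assms[OF that] by (intro sem_cong_fv) auto
  then show ?thesis
    by (simp add: sum_over_neighbours[symmetric] cong: map_cong)
qed

lemma label_separating_cr:
  fixes K :: "(real^'l::finite) set" and P :: "(('n::finite,'l) graph \<times> 'n) set"
  assumes "finite P" and P_graph: "\<And>p. p \<in> P \<Longrightarrow> is_graph K (fst p)"
    and IH: "\<And>(G :: ('n,'l) graph) (H :: ('n,'l) graph) v w. is_graph K G \<Longrightarrow> is_graph K H \<Longrightarrow> cr t G v \<noteq> cr t H w \<Longrightarrow>
      \<exists>\<phi>. gtl 1 \<phi> \<and> omega_ok \<phi> \<and> sdepth \<phi> \<le> t \<and> sem G (\<lambda>_. v) \<phi> \<noteq> sem H (\<lambda>_. w) \<phi>"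
  shows "label_separating P (\<lambda>p. cr t (fst p) (snd p)) (\<lambda>\<phi> p. sem (fst p) (\<lambda>_. snd p) \<phi>)
    {\<phi>. gtl 1 \<phi> \<and> omega_ok \<phi> \<and> sdepth \<phi> \<le> t}"
proof
  have "gtl 1 (EqI 1 1)" by (rule g_eq) simp
  then have "EqI 1 1 \<in> {\<phi>. gtl 1 \<phi> \<and> omega_ok \<phi> \<and> sdepth \<phi> \<le> t}" by simp
  then show "{\<phi>. gtl 1 \<phi> \<and> omega_ok \<phi> \<and> sdepth \<phi> \<le> t} \<noteq> {}" by blast
next
  fix p q and f :: "'l tl"
  assume "p \<in> P" "q \<in> P" "cr t (fst p) (snd p) = cr t (fst q) (snd q)"
    "f \<in> {\<phi>. gtl 1 \<phi> \<and> omega_ok \<phi> \<and> sdepth \<phi> \<le> t}"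
  then show "sem (fst p) (\<lambda>_. snd p) f = sem (fst q) (\<lambda>_. snd q) f"
    by (intro sem_eq_if_cr_eq) auto
next
  fix p q assume p: "p \<in> P" and q: "q \<in> P" and ne: "cr t (fst p) (snd p) \<noteq> cr t (fst q) (snd q)"
  show "\<exists>f\<in>{\<phi>. gtl 1 \<phi> \<and> omega_ok \<phi> \<and> sdepth \<phi> \<le> t}.
      sem (fst p) (\<lambda>_. snd p) f \<noteq> sem (fst q) (\<lambda>_. snd q) f"
    using IH[OF P_graph[OF p] P_graph[OF q] ne] by blast
next
  fix f :: "'l tl" and c :: real
  assume "f \<in> {\<phi>. gtl 1 \<phi> \<and> omega_ok \<phi> \<and> sdepth \<phi> \<le> t}"
  then show "\<exists>g\<in>{\<phi>. gtl 1 \<phi> \<and> omega_ok \<phi> \<and> sdepth \<phi> \<le> t}.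
      \<forall>p\<in>P. sem (fst p) (\<lambda>_. snd p) g = c * sem (fst p) (\<lambda>_. snd p) f"
    by (intro bexI[of _ "Scale c f"]) (auto intro: g_scale)
qed fact

lemma cr_separated_by_gtl:
  fixes K :: "(real^'l::finite) set" and G H :: "('n::finite,'l) graph"
  shows "is_graph K G \<Longrightarrow> is_graph K H \<Longrightarrow> cr t G v \<noteq> cr t H w \<Longrightarrow>
     \<exists>\<phi>. gtl 1 \<phi> \<and> omega_ok \<phi> \<and> sdepth \<phi> \<le> t \<and> sem G (\<lambda>_. v) \<phi> \<noteq> sem H (\<lambda>_. w) \<phi>"
proof (induction t arbitrary: G H v w)
  case 0
  then obtain s where s: "colG G v $ s \<noteq> colG H w $ s" by (auto simp: vec_eq_iff)
  have "gtl 1 (Pcol s 1)" by (rule g_col) simp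
  with s show ?case by (intro exI[of _ "Pcol s 1"]) simp
next
  case (Suc t)
  show ?case
  proof (cases "cr t G v = cr t H w")
    case False
    then show ?thesis using Suc.IH[OF Suc.prems(1,2)] by (meson le_SucI)
  next
    case True
    define P :: "(('n,'l) graph \<times> 'n) set" where "P = range (Pair G) \<union> range (Pair H)"
    define val where "val \<phi> p = sem (fst p) (\<lambda>_. snd p) \<phi>" for \<phi> and p :: "('n,'l) graph \<times> 'n"
    define F where "F = {\<phi> :: 'l tl. gtl 1 \<phi> \<and> omega_ok \<phi> \<and> sdepth \<phi> \<le> t}"
    interpret label_separating P "\<lambda>p. cr t (fst p) (snd p)" val F
      unfolding val_def F_def
    proof (rule label_separating_cr)
      show "finite P" unfolding P_def by simp
      show "is_graph K (fst p)" if "p \<in> P" for p using that Suc.prems(1,2) unfolding P_def by auto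
    qed (rule Suc.IH)
    obtain fs z where fs: "fs \<noteq> []" "set fs \<subseteq> F" "length z = length fs"
      and neq: "(\<Sum>u\<in>{u. adjG G v u}. bump z (map (\<lambda>f. val f (G, u)) fs))
        \<noteq> (\<Sum>u\<in>{u. adjG H w u}. bump z (map (\<lambda>f. val f (H, u)) fs))"
    proof (rule counting_separation[of "{u. adjG G v u}" "Pair G" "{u. adjG H w u}" "Pair H"])
      show "image_mset ((\<lambda>p. cr t (fst p) (snd p)) \<circ> Pair G) (mset_set {u. adjG G v u})
          \<noteq> image_mset ((\<lambda>p. cr t (fst p) (snd p)) \<circ> Pair H) (mset_set {u. adjG H w u})"
        using Suc.prems(3) True by (simp add: comp_def)
    qed (use that in \<open>auto simp: P_def\<close>)
    define \<psi> where "\<psi> = Sum 2 (Mul (Edge 1 2) (App (bump z) (map (rename_vars (Transposition.transpose 1 2)) fs)))"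
    have "gtl 2 (App (bump z) (map (rename_vars (Transposition.transpose 1 2)) fs))"
      using fs(1,2) gtl_rename_vars_swap12[of 1] by (intro g_app) (auto simp: F_def)
    then have "gtl 1 \<psi>" unfolding \<psi>_def by (intro g_sum) auto
    moreover have "omega_ok \<psi>" "sdepth \<psi> \<le> Suc t"
      using fs cont_arity_bump[of z] by (auto simp: \<psi>_def F_def)
    moreover have "sem X (\<lambda>_. x) \<psi> = (\<Sum>u\<in>{u. adjG X x u}. bump z (map (\<lambda>f. val f (X, u)) fs))" for X x
      unfolding \<psi>_def val_def using fs(2) by (subst sem_guarded_sum) (auto simp: F_def fv_gtl)
    ultimately show ?thesis using neq by metis
  qed
qed

lemma atp_separated_by_atom:
  fixes G H :: "('n::finite,'l::finite) graph"
  assumes "atp G (map \<nu> qs) \<noteq> atp H (map \<mu> qs)"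
  shows "\<exists>\<phi>. vars \<phi> \<subseteq> set qs \<and> fv \<phi> \<subseteq> set qs \<and> sdepth \<phi> = 0 \<and> omega_ok \<phi> \<and> sem G \<nu> \<phi> \<noteq> sem H \<mu> \<phi>"
proof (rule ccontr)
  assume none: "\<not> ?thesis"
  have atom: "sem G \<nu> \<phi> = sem H \<mu> \<phi>" if "vars \<phi> \<subseteq> set qs" "fv \<phi> \<subseteq> set qs" "sdepth \<phi> = 0" "omega_ok \<phi>" for \<phi>
    using none that by blast
  have "(\<nu> a = \<nu> b \<longleftrightarrow> \<mu> a = \<mu> b) \<and> (adjG G (\<nu> a) (\<nu> b) \<longleftrightarrow> adjG H (\<mu> a) (\<mu> b))"
    if "a \<in> set qs" "b \<in> set qs" for a b
    using atom[of "EqI a b"] atom[of "Edge a b"] that by (simp split: if_splits)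
  moreover have "colG G (\<nu> a) = colG H (\<mu> a)" if "a \<in> set qs" for a
    using atom[of "Pcol _ a"] that by (simp add: vec_eq_iff)
  ultimately have "atp G (map \<nu> qs) = atp H (map \<mu> qs)"
    unfolding atp_eq_iff by (auto simp: nth_mem)
  with assms show False ..
qed

lemma map_fun_upd_update:
  "j \<notin> set ps \<Longrightarrow> map (\<nu>(j := u)) (ps[i := j]) = (map \<nu> ps)[i := u]"
  by (simp add: map_fun_upd_notin map_update)

text \<open>What round \<open>t+1\<close> of \<open>k\<close>-WL on the tuple \<open>ps\<close> records about the vertex assigned to the
  variable \<open>w\<close>, paired with the round-\<open>t\<close> label of \<open>ps\<close> itself.\<close>

definition extension_label :: "nat \<Rightarrow> nat \<Rightarrow> nat list \<Rightarrow> nat \<Rightarrow> ('n::finite,'l::finite) graph \<times> (nat \<Rightarrow> 'n)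
    \<Rightarrow> (real^'l) lab \<times> (real^'l) lab" where
  "extension_label k t ps w p = (LTup (atp (fst p) (map (snd p) (ps @ [w])) #
     map (\<lambda>i. wl k t (fst p) (map (snd p) (ps[i := w]))) [0..<k]), wl k t (fst p) (map (snd p) ps))"

lemma extension_label_eq_iff: "extension_label k t ps w p = extension_label k t ps w q \<longleftrightarrow>
    atp (fst p) (map (snd p) (ps @ [w])) = atp (fst q) (map (snd q) (ps @ [w])) \<and>
    (\<forall>i<k. wl k t (fst p) (map (snd p) (ps[i := w])) = wl k t (fst q) (map (snd q) (ps[i := w]))) \<and>
    wl k t (fst p) (map (snd p) ps) = wl k t (fst q) (map (snd q) ps)"
  unfolding extension_label_def by (auto simp: map_eq_conv)

lemma extension_labels_differ:
  fixes G H :: "('n::finite,'l::finite) graph"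
  assumes w: "w \<notin> set ps"
    and "wl k (Suc t) G (map \<nu> ps) \<noteq> wl k (Suc t) H (map \<mu> ps)" "wl k t G (map \<nu> ps) = wl k t H (map \<mu> ps)"
  shows "image_mset (extension_label k t ps w \<circ> (\<lambda>u. (G, \<nu>(w := u)))) (mset_set UNIV)
    \<noteq> image_mset (extension_label k t ps w \<circ> (\<lambda>u. (H, \<mu>(w := u)))) (mset_set UNIV)"
proof
  define T where "T X vs u = LTup (atp X (vs @ [u]) # map (\<lambda>i. wl k t X (vs[i := u])) [0..<k])"
    for X :: "('n,'l) graph" and vs u
  have fst_label: "fst (extension_label k t ps w (X, \<rho>(w := u))) = T X (map \<rho> ps) u" for X \<rho> u
    unfolding extension_label_def T_def by (simp add: map_fun_upd_notin[OF w] map_fun_upd_update[OF w])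
  assume "image_mset (extension_label k t ps w \<circ> (\<lambda>u. (G, \<nu>(w := u)))) (mset_set UNIV)
    = image_mset (extension_label k t ps w \<circ> (\<lambda>u. (H, \<mu>(w := u)))) (mset_set UNIV)"
  then have "image_mset fst (image_mset (extension_label k t ps w \<circ> (\<lambda>u. (G, \<nu>(w := u)))) (mset_set UNIV))
    = image_mset fst (image_mset (extension_label k t ps w \<circ> (\<lambda>u. (H, \<mu>(w := u)))) (mset_set UNIV))"
    by simp
  then have "image_mset (T G (map \<nu> ps)) (mset_set UNIV) = image_mset (T H (map \<mu> ps)) (mset_set UNIV)"
    by (simp add: image_mset.compositionality comp_def fst_label)
  with assms(2,3) show False unfolding T_def by simp
qed

lemma label_separating_wl_extension:
  fixes K :: "(real^'l::finite) set" and P :: "(('n::finite,'l) graph \<times> (nat \<Rightarrow> 'n)) set"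
  assumes k: "k \<ge> 1" and "finite P" and P_graph: "\<And>p. p \<in> P \<Longrightarrow> is_graph K (fst p)"
    and ps: "length ps = k" "set ps \<subseteq> {1..k+1}" and w: "w \<in> {1..k+1}"
    and IH: "\<And>(G :: ('n,'l) graph) (H :: ('n,'l) graph) ps \<nu> \<mu>. is_graph K G \<Longrightarrow> is_graph K H \<Longrightarrow>
      length ps = k \<Longrightarrow> set ps \<subseteq> {1..k+1} \<Longrightarrow> wl k t G (map \<nu> ps) \<noteq> wl k t H (map \<mu> ps) \<Longrightarrow>
      \<exists>\<phi>. vars \<phi> \<subseteq> {1..k+1} \<and> omega_ok \<phi> \<and> fv \<phi> \<subseteq> set ps \<and> sdepth \<phi> \<le> t \<and> sem G \<nu> \<phi> \<noteq> sem H \<mu> \<phi>"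
  shows "label_separating P (extension_label k t ps w) (\<lambda>\<phi> p. sem (fst p) (snd p) \<phi>)
    {\<phi>. vars \<phi> \<subseteq> {1..k+1} \<and> omega_ok \<phi> \<and> fv \<phi> \<subseteq> set ps \<union> {w} \<and> sdepth \<phi> \<le> t}"
    (is "label_separating P _ _ ?F")
proof
  have "EqI w w \<in> ?F" using w by auto
  then show "?F \<noteq> {}" by blast
next
  fix p q and f :: "'l tl"
  assume "p \<in> P" "q \<in> P" "extension_label k t ps w p = extension_label k t ps w q" "f \<in> ?F"
  then show "sem (fst p) (snd p) f = sem (fst q) (snd q) f"
    unfolding extension_label_eq_iff
    by (intro sem_eq_if_wl_extension_eq[OF k P_graph P_graph ps w]) auto
next
  fix p q assume p: "p \<in> P" and q: "q \<in> P"
    and "extension_label k t ps w p \<noteq> extension_label k t ps w q"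
  then consider
      (atp) "atp (fst p) (map (snd p) (ps @ [w])) \<noteq> atp (fst q) (map (snd q) (ps @ [w]))"
    | (upd) i where "i < k" "wl k t (fst p) (map (snd p) (ps[i := w])) \<noteq> wl k t (fst q) (map (snd q) (ps[i := w]))"
    | (base) "wl k t (fst p) (map (snd p) ps) \<noteq> wl k t (fst q) (map (snd q) ps)"
    unfolding extension_label_eq_iff by blast
  then show "\<exists>f\<in>?F. sem (fst p) (snd p) f \<noteq> sem (fst q) (snd q) f"
  proof cases
    case atp
    then show ?thesis using atp_separated_by_atom[OF atp] ps(2) w by fastforce
  next
    case (upd i)
    have "length (ps[i := w]) = k" "set (ps[i := w]) \<subseteq> {1..k+1}"
      using ps w set_update_subset_insert[of ps i w] by auto
    then show ?thesis
      using IH[OF P_graph[OF p] P_graph[OF q] _ _ upd(2)] set_update_subset_insert[of ps i w] by fastforce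
  next
    case base
    then show ?thesis using IH[OF P_graph[OF p] P_graph[OF q] ps base] by fastforce
  qed
next
  fix f :: "'l tl" and c :: real
  assume "f \<in> ?F"
  then show "\<exists>g\<in>?F. \<forall>p\<in>P. sem (fst p) (snd p) g = c * sem (fst p) (snd p) f"
    by (intro bexI[of _ "Scale c f"]) auto
qed fact

lemma wl_separated_by_TL:
  fixes K :: "(real^'l::finite) set" and G H :: "('n::finite,'l) graph"
  assumes k: "k \<ge> 1"
  shows "is_graph K G \<Longrightarrow> is_graph K H \<Longrightarrow> length ps = k \<Longrightarrow> set ps \<subseteq> {1..k+1} \<Longrightarrow>
    wl k t G (map \<nu> ps) \<noteq> wl k t H (map \<mu> ps) \<Longrightarrow>
    \<exists>\<phi>. vars \<phi> \<subseteq> {1..k+1} \<and> omega_ok \<phi> \<and> fv \<phi> \<subseteq> set ps \<and> sdepth \<phi> \<le> t \<and> sem G \<nu> \<phi> \<noteq> sem H \<mu> \<phi>"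
proof (induction t arbitrary: G H ps \<nu> \<mu>)
  case 0
  then obtain \<phi> where "vars \<phi> \<subseteq> set ps" "fv \<phi> \<subseteq> set ps" "sdepth \<phi> = 0" "omega_ok \<phi>" "sem G \<nu> \<phi> \<noteq> sem H \<mu> \<phi>"
    using atp_separated_by_atom[of G \<nu> ps H \<mu>] by auto
  with "0.prems"(4) show ?case by (intro exI[of _ \<phi>]) auto
next
  case (Suc t)
  note G = Suc.prems(1) and H = Suc.prems(2) and ps = Suc.prems(3,4)
  show ?case
  proof (cases "wl k t G (map \<nu> ps) = wl k t H (map \<mu> ps)")
    case False
    then show ?thesis using Suc.IH[OF G H ps] by (meson le_SucI)
  next
    case True
    obtain w where w: "w \<in> {1..k+1}" "w \<notin> set ps" using exists_var_not_in_tuple[OF ps(1)] by blast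
    define P :: "(('n,'l) graph \<times> (nat \<Rightarrow> 'n)) set"
      where "P = range (\<lambda>u. (G, \<nu>(w := u))) \<union> range (\<lambda>u. (H, \<mu>(w := u)))"
    define lab :: "('n,'l) graph \<times> (nat \<Rightarrow> 'n) \<Rightarrow> _" where "lab = extension_label k t ps w"
    define val where "val \<phi> p = sem (fst p) (snd p) \<phi>" for \<phi> and p :: "('n,'l) graph \<times> (nat \<Rightarrow> 'n)"
    define F where "F = {\<phi> :: 'l tl. vars \<phi> \<subseteq> {1..k+1} \<and> omega_ok \<phi> \<and> fv \<phi> \<subseteq> set ps \<union> {w} \<and> sdepth \<phi> \<le> t}"
    interpret label_separating P lab val F
      unfolding lab_def val_def F_def
    proof (rule label_separating_wl_extension[OF k _ _ ps w(1)])
      show "finite P" unfolding P_def by simp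
      show "is_graph K (fst p)" if "p \<in> P" for p using that G H unfolding P_def by auto
    qed (rule Suc.IH)
    have "image_mset (lab \<circ> (\<lambda>u. (G, \<nu>(w := u)))) (mset_set UNIV)
        \<noteq> image_mset (lab \<circ> (\<lambda>u. (H, \<mu>(w := u)))) (mset_set UNIV)"
      unfolding lab_def by (rule extension_labels_differ[OF w(2) Suc.prems(5) True])
    then obtain fs z where fs: "fs \<noteq> []" "set fs \<subseteq> F" "length z = length fs"
      and neq: "(\<Sum>u\<in>UNIV. bump z (map (\<lambda>f. val f (G, \<nu>(w := u))) fs))
        \<noteq> (\<Sum>u\<in>UNIV. bump z (map (\<lambda>f. val f (H, \<mu>(w := u))) fs))"
      by (rule counting_separation[rotated 4]) (auto simp: P_def)
    define \<psi> where "\<psi> = Sum w (App (bump z) fs)"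
    have "vars \<psi> \<subseteq> {1..k+1}" "omega_ok \<psi>" "fv \<psi> \<subseteq> set ps" "sdepth \<psi> \<le> Suc t"
      using fs w(1) cont_arity_bump[of z] unfolding \<psi>_def F_def by auto
    moreover have "sem G \<nu> \<psi> \<noteq> sem H \<mu> \<psi>"
      using neq unfolding \<psi>_def val_def by (simp cong: map_cong)
    ultimately show ?thesis by blast
  qed
qed

fun Sum_upto :: "nat \<Rightarrow> 'l tl \<Rightarrow> 'l tl" where
  "Sum_upto 0 \<gamma> = \<gamma>"
| "Sum_upto (Suc n) \<gamma> = Sum_upto n (Sum (Suc n) \<gamma>)"

definition tuple_assignment :: "'a list \<Rightarrow> nat \<Rightarrow> 'a" where
  "tuple_assignment vs i = vs ! (i - 1)"

definition override_upto :: "nat \<Rightarrow> (nat \<Rightarrow> 'a) \<Rightarrow> 'a list \<Rightarrow> nat \<Rightarrow> 'a" where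
  "override_upto n \<nu> vs i = (if 1 \<le> i \<and> i \<le> n then tuple_assignment vs i else \<nu> i)"

lemma sum_lists_Suc:
  "(\<Sum>vs\<in>{vs :: 'a::finite list. length vs = Suc n}. f vs) =
   (\<Sum>vs\<in>{vs :: 'a list. length vs = n}. \<Sum>u\<in>UNIV. f (vs @ [u]))"
proof -
  let ?A = "{vs :: 'a list. length vs = n}"
  let ?h = "\<lambda>(vs, u). vs @ [u :: 'a]"
  have inj: "inj_on ?h (?A \<times> UNIV)" by (auto simp: inj_on_def)
  have img: "?h ` (?A \<times> UNIV) = {vs. length vs = Suc n}"
  proof
    show "{vs. length vs = Suc n} \<subseteq> ?h ` (?A \<times> UNIV)"
    proof
      fix xs :: "'a list" assume "xs \<in> {vs. length vs = Suc n}"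
      then have "xs = butlast xs @ [last xs]" "butlast xs \<in> ?A"
        by (auto intro: append_butlast_last_id[symmetric])
      then show "xs \<in> ?h ` (?A \<times> UNIV)" by (metis (no_types, lifting) SigmaI UNIV_I case_prod_conv image_eqI)
    qed
  qed auto
  have "(\<Sum>vs\<in>?A. \<Sum>u\<in>UNIV. f (vs @ [u])) = (\<Sum>p\<in>?A \<times> UNIV. f (?h p))"
    by (simp add: sum.cartesian_product case_prod_beta)
  also have "\<dots> = (\<Sum>xs\<in>?h ` (?A \<times> UNIV). f xs)"
    using sum.reindex[OF inj, of f] by (simp add: o_def)
  finally show ?thesis unfolding img by simp
qed

lemma sem_Sum_upto:
  "sem G \<nu> (Sum_upto n \<gamma>) = (\<Sum>vs\<in>{vs. length vs = n}. sem G (override_upto n \<nu> vs) \<gamma>)"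
proof (induction n arbitrary: \<gamma>)
  case 0
  have "{vs :: 'a list. length vs = 0} = {[]}" by auto
  moreover have "override_upto 0 \<nu> [] = \<nu>" by (auto simp: override_upto_def)
  ultimately show ?case by simp
next
  case (Suc n)
  have upd: "(override_upto n \<nu> vs)(Suc n := u) = override_upto (Suc n) \<nu> (vs @ [u])"
    if "length vs = n" for vs u
    using that by (auto simp: override_upto_def tuple_assignment_def fun_eq_iff nth_append)
  have "sem G \<nu> (Sum_upto (Suc n) \<gamma>)
      = (\<Sum>vs\<in>{vs. length vs = n}. \<Sum>u\<in>UNIV. sem G ((override_upto n \<nu> vs)(Suc n := u)) \<gamma>)"
    using Suc by simp
  also have "\<dots> = (\<Sum>vs\<in>{vs. length vs = n}. \<Sum>u\<in>UNIV. sem G (override_upto (Suc n) \<nu> (vs @ [u])) \<gamma>)"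
    using upd by (intro sum.cong) auto
  also have "\<dots> = (\<Sum>vs\<in>{vs. length vs = Suc n}. sem G (override_upto (Suc n) \<nu> vs) \<gamma>)"
    by (rule sum_lists_Suc[symmetric])
  finally show ?case .
qed

lemma vars_Sum_upto: "vars (Sum_upto n \<gamma>) = {1..n} \<union> vars \<gamma>"
  by (induction n arbitrary: \<gamma>) (auto simp: atLeastAtMostSuc_conv)

lemma fv_Sum_upto: "fv (Sum_upto n \<gamma>) = fv \<gamma> - {1..n}"
  by (induction n arbitrary: \<gamma>) (auto simp: atLeastAtMostSuc_conv)

lemma sdepth_Sum_upto: "sdepth (Sum_upto n \<gamma>) = n + sdepth \<gamma>"
  by (induction n arbitrary: \<gamma>) auto

lemma omega_ok_Sum_upto: "omega_ok (Sum_upto n \<gamma>) = omega_ok \<gamma>"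
  by (induction n arbitrary: \<gamma>) auto

lemma map_tuple_assignment:
  assumes "length vs = k" shows "map (tuple_assignment vs) [1..<k+1] = vs"
proof -
  have "map (tuple_assignment vs) [1..<k+1] = map (tuple_assignment vs) (map Suc [0..<k])"
    using map_Suc_upt[of 0 k] by simp
  also have "\<dots> = map (\<lambda>i. vs ! i) [0..<k]" by (simp add: tuple_assignment_def)
  also have "\<dots> = vs" using assms map_nth by blast
  finally show ?thesis .
qed

lemma label_separating_wl:
  fixes K :: "(real^'l::finite) set" and P :: "(('n::finite,'l) graph \<times> (nat \<Rightarrow> 'n)) set"
  assumes k: "k \<ge> 1" and "finite P" and P_graph: "\<And>p. p \<in> P \<Longrightarrow> is_graph K (fst p)"
    and ps: "length ps = k" "set ps \<subseteq> {1..k+1}"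
  shows "label_separating P (\<lambda>p. wl k t (fst p) (map (snd p) ps)) (\<lambda>\<phi> p. sem (fst p) (snd p) \<phi>)
    {\<phi>. vars \<phi> \<subseteq> {1..k+1} \<and> omega_ok \<phi> \<and> fv \<phi> \<subseteq> set ps \<and> sdepth \<phi> \<le> t}"
    (is "label_separating P _ _ ?F")
proof
  have "ps ! 0 \<in> set ps" using ps(1) k by simp
  then have "EqI (ps ! 0) (ps ! 0) \<in> ?F" using ps(2) by auto
  then show "?F \<noteq> {}" by blast
next
  fix p q and f :: "'l tl"
  assume "p \<in> P" "q \<in> P" "wl k t (fst p) (map (snd p) ps) = wl k t (fst q) (map (snd q) ps)" "f \<in> ?F"
  then show "sem (fst p) (snd p) f = sem (fst q) (snd q) f"
    by (intro sem_eq_if_wl_eq[OF k P_graph P_graph ps]) auto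
next
  fix p q assume "p \<in> P" "q \<in> P" "wl k t (fst p) (map (snd p) ps) \<noteq> wl k t (fst q) (map (snd q) ps)"
  then show "\<exists>f\<in>?F. sem (fst p) (snd p) f \<noteq> sem (fst q) (snd q) f"
    using wl_separated_by_TL[OF k P_graph P_graph ps] by blast
next
  fix f :: "'l tl" and c :: real
  assume "f \<in> ?F"
  then show "\<exists>g\<in>?F. \<forall>p\<in>P. sem (fst p) (snd p) g = c * sem (fst p) (snd p) f"
    by (intro bexI[of _ "Scale c f"]) auto
qed fact

lemma sem_Sum_upto_App:
  assumes "\<And>f. f \<in> set fs \<Longrightarrow> fv f \<subseteq> {1..k}"
  shows "sem X \<rho> (Sum_upto k (App g fs))
    = (\<Sum>vs\<in>{vs. length vs = k}. g (map (\<lambda>f. sem X (tuple_assignment vs) f) fs))"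
proof -
  have "sem X (override_upto k \<rho> vs) f = sem X (tuple_assignment vs) f" if "f \<in> set fs" for f vs
    using assms[OF that] by (intro sem_cong_fv) (auto simp: override_upto_def)
  then show ?thesis unfolding sem_Sum_upto by (simp cong: map_cong)
qed

lemma image_mset_wl_tuple_assignment:
  "image_mset (\<lambda>vs. wl k t X (map (tuple_assignment vs) [1..<k+1])) (mset_set {vs :: 'n::finite list. length vs = k})
    = image_mset (wl k t X) (mset_set {vs. length vs = k})"
proof (rule image_mset_cong)
  fix vs :: "'n list" assume "vs \<in># mset_set {vs. length vs = k}"
  moreover have "finite {vs :: 'n list. length vs = k}" by (rule finite_tuples)
  ultimately have "length vs = k" by simp
  then show "wl k t X (map (tuple_assignment vs) [1..<k+1]) = wl k t X vs"
    by (simp only: map_tuple_assignment)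
qed

lemma gwl_separated_by_TL:
  fixes K :: "(real^'l::finite) set" and G H :: "('n::finite,'l) graph"
  assumes k: "k \<ge> 1" and G: "is_graph K G" and H: "is_graph K H" and differ: "gwl k t G \<noteq> gwl k t H"
  shows "\<exists>\<phi>. vars \<phi> \<subseteq> {1..k+1} \<and> omega_ok \<phi> \<and> fv \<phi> = {} \<and> sdepth \<phi> \<le> t + k \<and> sem G \<nu> \<phi> \<noteq> sem H \<mu> \<phi>"
proof -
  define TU where "TU = {vs :: 'n list. length vs = k}"
  define ps where "ps = [1..<k+1]"
  have ps: "length ps = k" "set ps \<subseteq> {1..k+1}" "set ps = {1..k}" unfolding ps_def by auto
  define P where "P = (\<lambda>vs. (G, tuple_assignment vs)) ` TU \<union> (\<lambda>vs. (H, tuple_assignment vs)) ` TU"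
  define lab where "lab p = wl k t (fst p) (map (snd p) ps)" for p :: "('n,'l) graph \<times> (nat \<Rightarrow> 'n)"
  define val where "val \<phi> p = sem (fst p) (snd p) \<phi>" for \<phi> and p :: "('n,'l) graph \<times> (nat \<Rightarrow> 'n)"
  define F where "F = {\<phi> :: 'l tl. vars \<phi> \<subseteq> {1..k+1} \<and> omega_ok \<phi> \<and> fv \<phi> \<subseteq> set ps \<and> sdepth \<phi> \<le> t}"
  interpret label_separating P lab val F
    unfolding lab_def val_def F_def
  proof (rule label_separating_wl[OF k _ _ ps(1,2)])
    show "finite P" unfolding P_def TU_def using finite_tuples by blast
    show "is_graph K (fst p)" if "p \<in> P" for p using that G H unfolding P_def by auto
  qed
  have "image_mset (lab \<circ> (\<lambda>vs. (G, tuple_assignment vs))) (mset_set TU)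
      \<noteq> image_mset (lab \<circ> (\<lambda>vs. (H, tuple_assignment vs))) (mset_set TU)"
    using differ image_mset_wl_tuple_assignment[of k t G] image_mset_wl_tuple_assignment[of k t H]
    unfolding gwl_def TU_def lab_def ps_def comp_def by simp
  then obtain fs z where fs: "fs \<noteq> []" "set fs \<subseteq> F" "length z = length fs"
    and neq: "(\<Sum>vs\<in>TU. bump z (map (\<lambda>f. val f (G, tuple_assignment vs)) fs))
      \<noteq> (\<Sum>vs\<in>TU. bump z (map (\<lambda>f. val f (H, tuple_assignment vs)) fs))"
    by (rule counting_separation[rotated 4]) (auto simp: P_def TU_def finite_tuples)
  define \<psi> where "\<psi> = Sum_upto k (App (bump z) fs)"
  have "vars \<psi> \<subseteq> {1..k+1}" "omega_ok \<psi>" "fv \<psi> = {}" "sdepth \<psi> \<le> t + k"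
    using fs ps(3) cont_arity_bump[of z]
    unfolding \<psi>_def vars_Sum_upto fv_Sum_upto sdepth_Sum_upto omega_ok_Sum_upto F_def by auto
  moreover have "sem X \<rho> \<psi> = (\<Sum>vs\<in>TU. bump z (map (\<lambda>f. val f (X, tuple_assignment vs)) fs))" for X \<rho>
    unfolding \<psi>_def TU_def val_def using fs(2) ps(3)
    by (subst sem_Sum_upto_App) (auto simp: F_def)
  ultimately show ?thesis using neq by metis
qed

lemma gtl_1_if_GTL2t:
  assumes "\<phi> \<in> GTL2t t" "fv \<phi> \<subseteq> {1}"
  shows "gtl 1 \<phi>"
proof -
  obtain i where i: "gtl i \<phi>" using assms(1) unfolding GTL2t_def GTL2_def by blast
  then have "i = 1" using fv_gtl[OF i] assms(2) by simp
  with i show ?thesis by simp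
qed

lemma uclos1_GTL2t:
  fixes K :: "(real^'l::finite) set"
  assumes K: "compact K"
  shows "uclos1 K (rep1 K (GTL2t t) :: (('n::finite,'l) graph \<times> 'n \<Rightarrow> real^'d::finite) set)
    = {f. cont1 K f \<and> rho1_sub K (cr t) f}"
proof (rule uclos1_rep1_eq[OF K])
  have "gtl 1 (EqI 1 1)" by (rule g_eq) simp
  then show "EqI 1 1 \<in> GTL2t t" unfolding GTL2t_def GTL2_def by auto
next
  fix g and as :: "'l tl list"
  assume as: "as \<noteq> []" "cont_arity (length as) g" "\<forall>a\<in>set as. a \<in> GTL2t t \<and> fv a \<subseteq> {1}"
  then have "gtl 1 (App g as)" using gtl_1_if_GTL2t by (blast intro: g_app)
  with as show "App g as \<in> GTL2t t" unfolding GTL2t_def GTL2_def by auto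
next
  fix \<phi> :: "'l tl" and G H :: "('n,'l) graph" and v w
  assume "\<phi> \<in> GTL2t t" "fv \<phi> \<subseteq> {1}" "cr t G v = cr t H w"
  then show "sem G (\<lambda>_. v) \<phi> = sem H (\<lambda>_. w) \<phi>"
    using gtl_1_if_GTL2t by (intro sem_eq_if_cr_eq[of 1]) (auto simp: GTL2t_def)
next
  fix G H :: "('n,'l) graph" and v w
  assume "is_graph K G" "is_graph K H" "cr t G v \<noteq> cr t H w"
  then obtain \<phi> where "gtl 1 \<phi>" "omega_ok \<phi>" "sdepth \<phi> \<le> t" "sem G (\<lambda>_. v) \<phi> \<noteq> sem H (\<lambda>_. w) \<phi>"
    using cr_separated_by_gtl by blast
  then show "\<exists>\<phi>\<in>GTL2t t. fv \<phi> \<subseteq> {1} \<and> sem G (\<lambda>_. v) \<phi> \<noteq> sem H (\<lambda>_. w) \<phi>"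
    unfolding GTL2t_def GTL2_def by (auto simp: fv_gtl)
qed (simp add: GTL2t_def GTL2_def)

lemma uclos1_TLt_vwl:
  fixes K :: "(real^'l::finite) set"
  assumes K: "compact K" and k: "k \<ge> 1"
  shows "uclos1 K (rep1 K (TLt (k+1) t) :: (('n::finite,'l) graph \<times> 'n \<Rightarrow> real^'d::finite) set)
    = {f. cont1 K f \<and> rho1_sub K (vwl k t) f}"
proof (rule uclos1_rep1_eq[OF K])
  have ones: "set (replicate k (1::nat)) = {1}"
    using k by simp
  {
    fix \<phi> :: "'l tl" and G H :: "('n,'l) graph" and v w
    assume \<phi>: "\<phi> \<in> TLt (k+1) t" "fv \<phi> \<subseteq> {1}" and G: "is_graph K G" and H: "is_graph K H"
      and eq: "vwl k t G v = vwl k t H w"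
    show "sem G (\<lambda>_. v) \<phi> = sem H (\<lambda>_. w) \<phi>"
    proof (rule sem_eq_if_wl_eq[OF k G H, of "replicate k 1"])
      show "fv \<phi> \<subseteq> set (replicate k 1)" using \<phi>(2) ones(1) by simp
      show "wl k t G (map (\<lambda>_. v) (replicate k 1)) = wl k t H (map (\<lambda>_. w) (replicate k 1))"
        using eq by (simp add: vwl_def)
    qed (use \<phi>(1) ones(1) in \<open>auto simp: TLt_def TL_def\<close>)
  next
    fix G H :: "('n,'l) graph" and v w
    assume G: "is_graph K G" and H: "is_graph K H" and "vwl k t G v \<noteq> vwl k t H w"
    then have neq: "wl k t G (map (\<lambda>_. v) (replicate k 1)) \<noteq> wl k t H (map (\<lambda>_. w) (replicate k 1))"
      by (simp add: vwl_def)
    then obtain \<phi> where "vars \<phi> \<subseteq> {1..k+1}" "omega_ok \<phi>" "fv \<phi> \<subseteq> {1}" "sdepth \<phi> \<le> t"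
      "sem G (\<lambda>_. v) \<phi> \<noteq> sem H (\<lambda>_. w) \<phi>"
      using wl_separated_by_TL[OF k G H _ _ neq] ones by auto
    then show "\<exists>\<phi>\<in>TLt (k+1) t. fv \<phi> \<subseteq> {1} \<and> sem G (\<lambda>_. v) \<phi> \<noteq> sem H (\<lambda>_. w) \<phi>"
      unfolding TLt_def TL_def by auto
  }
qed (auto simp: TLt_def TL_def)

lemma uclos0_TLt2_gwl1:
  fixes K :: "(real^'l::finite) set"
  assumes K: "compact K"
  shows "uclos0 K (rep0 K (TLt 2 (t+1)) :: (('n::finite,'l) graph \<Rightarrow> real^'d::finite) set)
    = {f. cont0 K f \<and> rho0_sub K (gwl 1 t) f}"
proof (rule uclos0_rep0_eq[OF K, of "Sum 1 (EqI 1 1)"])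
  fix \<phi> :: "'l tl" and G H :: "('n,'l) graph"
  assume "\<phi> \<in> TLt 2 (t+1)" "fv \<phi> = {}" "is_graph K G" "is_graph K H" "gwl 1 t G = gwl 1 t H"
  then show "sem G (\<lambda>_. undefined) \<phi> = sem H (\<lambda>_. undefined) \<phi>"
    by (intro sem_eq_if_gwl_eq[of 1 K G H t]) (auto simp: TLt_def TL_def numeral_2_eq_2)
next
  fix G H :: "('n,'l) graph"
  assume G: "is_graph K G" and H: "is_graph K H" and neq: "gwl 1 t G \<noteq> gwl 1 t H"
  obtain \<phi> where "vars \<phi> \<subseteq> {1..1+1}" "omega_ok \<phi>" "fv \<phi> = {}" "sdepth \<phi> \<le> t + 1"
    "sem G (\<lambda>_. undefined) \<phi> \<noteq> sem H (\<lambda>_. undefined) \<phi>"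
    using gwl_separated_by_TL[OF order_refl G H neq] by blast
  then show "\<exists>\<phi>\<in>TLt 2 (t+1). fv \<phi> = {} \<and> sem G (\<lambda>_. undefined) \<phi> \<noteq> sem H (\<lambda>_. undefined) \<phi>"
    unfolding TLt_def TL_def by (auto simp: numeral_2_eq_2)
qed (auto simp: TLt_def TL_def)

lemma uclos0_TL_gwl_inf:
  fixes K :: "(real^'l::finite) set"
  assumes K: "compact K" and k: "k \<ge> 1"
  shows "uclos0 K (rep0 K (TL (k+1)) :: (('n::finite,'l) graph \<Rightarrow> real^'d::finite) set)
    = {f. cont0 K f \<and> rho0_sub_gwl_inf K k f}"
proof -
  have rho: "rho0_sub K (\<lambda>G t. gwl k t G) f = rho0_sub_gwl_inf K k f" for f :: "('n,'l) graph \<Rightarrow> real^'d"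
    unfolding rho0_sub_def rho0_sub_gwl_inf_def by (simp add: fun_eq_iff)
  have "uclos0 K (rep0 K (TL (k+1)) :: (('n,'l) graph \<Rightarrow> real^'d) set)
      = {f. cont0 K f \<and> rho0_sub K (\<lambda>G t. gwl k t G) f}"
  proof (rule uclos0_rep0_eq[OF K, of "Sum 1 (EqI 1 1)"])
    fix \<phi> :: "'l tl" and G H :: "('n,'l) graph"
    assume \<phi>: "\<phi> \<in> TL (k+1)" "fv \<phi> = {}" and G: "is_graph K G" and H: "is_graph K H"
      and eq: "(\<lambda>t. gwl k t G) = (\<lambda>t. gwl k t H)"
    have "gwl k (sdepth \<phi>) G = gwl k (sdepth \<phi>) H" using fun_cong[OF eq] .
    then show "sem G (\<lambda>_. undefined) \<phi> = sem H (\<lambda>_. undefined) \<phi>"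
      by (rule sem_eq_if_gwl_eq[OF k G H]) (use \<phi> in \<open>auto simp: TL_def\<close>)
  next
    fix G H :: "('n,'l) graph"
    assume "is_graph K G" "is_graph K H" "(\<lambda>t. gwl k t G) \<noteq> (\<lambda>t. gwl k t H)"
    then obtain t where "is_graph K G" "is_graph K H" "gwl k t G \<noteq> gwl k t H" by (auto simp: fun_eq_iff)
    then obtain \<phi> where "vars \<phi> \<subseteq> {1..k+1}" "omega_ok \<phi>" "fv \<phi> = {}"
      "sem G (\<lambda>_. undefined) \<phi> \<noteq> sem H (\<lambda>_. undefined) \<phi>"
      using gwl_separated_by_TL[OF k] by blast
    then show "\<exists>\<phi>\<in>TL (k+1). fv \<phi> = {} \<and> sem G (\<lambda>_. undefined) \<phi> \<noteq> sem H (\<lambda>_. undefined) \<phi>"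
      unfolding TL_def by auto
  qed (auto simp: TL_def)
  then show ?thesis by (simp only: rho)
qed

theorem mainTheorem12:
  fixes K :: "(real^'l::finite) set" and t k :: nat
  assumes "compact K" and "k \<ge> 1"
  shows
   "(uclos1 K (rep1 K (GTL2t t) :: (('n::finite,'l) graph \<times> 'n \<Rightarrow> real^'d::finite) set)
      = {f. cont1 K f \<and> rho1_sub K (cr t) f})
   \<and> (uclos1 K (rep1 K (TLt (k+1) t) :: (('n,'l) graph \<times> 'n \<Rightarrow> real^'d) set)
      = {f. cont1 K f \<and> rho1_sub K (vwl k t) f})
   \<and> (uclos0 K (rep0 K (TLt 2 (t+1)) :: (('n,'l) graph \<Rightarrow> real^'d) set)
      = {f. cont0 K f \<and> rho0_sub K (gwl 1 t) f})
   \<and> (uclos0 K (rep0 K (TL (k+1)) :: (('n,'l) graph \<Rightarrow> real^'d) set)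
      = {f. cont0 K f \<and> rho0_sub_gwl_inf K k f})"
  by (intro conjI uclos1_GTL2t[OF assms(1)] uclos1_TLt_vwl[OF assms] uclos0_TLt2_gwl1[OF assms(1)]
      uclos0_TL_gwl_inf[OF assms])


end
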